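(* Let $(M_n,S_n)_{n\ge0}$ be a Markov random walk with irreducible positive recurrent driving chain on a countable set $\mathcal S$, and let $i,j\in\mathcal S$ be distinct. Let $\upsilon=\inf\{n\ge1:\tau_n(i)>\tau(j)\}$. Then: (a) there exists $x\ge0$ such that $\limsup_{y\to\infty}\mathbb P_j(S_{\tau(j)}>y)/\mathbb P_i(S_{\tau_\upsilon(i)}>y-x)<\infty$; (b) $\mathbb P_j(S_{\tau(j)}>0)>0$ implies $\mathbb P_i(S_{\tau_\upsilon(i)}>0)>0$.
   Context: $\mathcal S$ countable; $(M_n)_{n\ge0}$ irreducible positive recurrent Markov chain on $\mathcal S$. Markov random walk: $S_0=0$, $S_n=X_1+\dots+X_n$, the $X_n$ conditionally independent given $(M_n)$ with $\mathbb P((X_1,\dots,X_n)\in\cdot\mid M_0=i_0,\dots,M_n=i_n)=K_{i_0i_1}\otimes\cdots\otimes K_{i_{n-1}i_n}$ for a stochastic kernel $K$ from $\mathcal S^2$ to $\mathbb R$. $\mathbb P_i=\mathbb P(\cdot\mid M_0=i)$. $\tau(j)=\inf\{n\ge1:M_n=j\}$, $\tau_0(i)=0$, $\tau_n(i)$ the $n$-th return time to $i$. *)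

theory Defs
  imports "HOL-Probability.Probability"
begin

text \<open>Markov random walk with driving chain M (states in a countable type 's),
  increments X 1, X 2, ... (X 0 is unused), transition matrix p and kernel K.
  P i is the law given M 0 = i. The finite-dimensional distributions are fixed
  on product sets: the chain is Markov with transition matrix p, and given the
  chain the increments are independent with X k distributed as K (M (k-1)) (M k).\<close>

definition MRW ::
  "('s::countable \<Rightarrow> 'a measure) \<Rightarrow> ('s \<Rightarrow> 's \<Rightarrow> real) \<Rightarrow> ('s \<Rightarrow> 's \<Rightarrow> real measure)
    \<Rightarrow> (nat \<Rightarrow> 'a \<Rightarrow> 's) \<Rightarrow> (nat \<Rightarrow> 'a \<Rightarrow> real) \<Rightarrow> bool" where
  "MRW P p K M X \<longleftrightarrow>
     (\<forall>i. prob_space (P i)) \<and>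
     (\<forall>i n. M n \<in> measurable (P i) (count_space UNIV)) \<and>
     (\<forall>i n. X n \<in> borel_measurable (P i)) \<and>
     (\<forall>s t. prob_space (K s t) \<and> sets (K s t) = sets borel) \<and>
     (\<forall>i n (s::nat \<Rightarrow> 's) (B::nat \<Rightarrow> real set). (\<forall>k. B k \<in> sets borel) \<longrightarrow>
        measure (P i) {\<omega> \<in> space (P i). (\<forall>k\<le>n. M k \<omega> = s k) \<and> (\<forall>k\<in>{1..n}. X k \<omega> \<in> B k)}
        = (if s 0 = i then 1 else 0) *
          (\<Prod>k\<in>{1..n}. p (s (k - 1)) (s k) * measure (K (s (k - 1)) (s k)) (B k)))"

definition Ssum :: "(nat \<Rightarrow> 'a \<Rightarrow> real) \<Rightarrow> nat \<Rightarrow> 'a \<Rightarrow> real" where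
  "Ssum X n \<omega> = (\<Sum>k\<in>{1..n}. X k \<omega>)"

definition hit_time :: "(nat \<Rightarrow> 'a \<Rightarrow> 's) \<Rightarrow> 's \<Rightarrow> 'a \<Rightarrow> enat" where
  "hit_time M j \<omega> = (if \<exists>n\<ge>1. M n \<omega> = j then enat (LEAST n. 1 \<le> n \<and> M n \<omega> = j) else \<infinity>)"

fun ret_time :: "(nat \<Rightarrow> 'a \<Rightarrow> 's) \<Rightarrow> 's \<Rightarrow> nat \<Rightarrow> 'a \<Rightarrow> enat" where
  "ret_time M i 0 \<omega> = 0"
| "ret_time M i (Suc n) \<omega> =
     (case ret_time M i n \<omega> of \<infinity> \<Rightarrow> \<infinity>
      | enat m \<Rightarrow> (if \<exists>k>m. M k \<omega> = i then enat (LEAST k. m < k \<and> M k \<omega> = i) else \<infinity>))"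

definition ups_time :: "(nat \<Rightarrow> 'a \<Rightarrow> 's) \<Rightarrow> 's \<Rightarrow> 's \<Rightarrow> 'a \<Rightarrow> enat" where
  "ups_time M i j \<omega> =
     (if \<exists>n\<ge>1. ret_time M i n \<omega> > hit_time M j \<omega>
      then ret_time M i (LEAST n. 1 \<le> n \<and> ret_time M i n \<omega> > hit_time M j \<omega>) \<omega>
      else \<infinity>)"

definition S_at_gt :: "'a measure \<Rightarrow> (nat \<Rightarrow> 'a \<Rightarrow> real) \<Rightarrow> ('a \<Rightarrow> enat) \<Rightarrow> real \<Rightarrow> 'a set" where
  "S_at_gt Q X T y = {\<omega> \<in> space Q. T \<omega> \<noteq> \<infinity> \<and> Ssum X (the_enat (T \<omega>)) \<omega> > y}"

definition irreducible_chain :: "('s \<Rightarrow> 'a measure) \<Rightarrow> (nat \<Rightarrow> 'a \<Rightarrow> 's) \<Rightarrow> bool" where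
  "irreducible_chain P M \<longleftrightarrow> (\<forall>i j. \<exists>n. measure (P i) {\<omega> \<in> space (P i). M n \<omega> = j} > 0)"

definition positive_recurrent :: "('s \<Rightarrow> 'a measure) \<Rightarrow> (nat \<Rightarrow> 'a \<Rightarrow> 's) \<Rightarrow> bool" where
  "positive_recurrent P M \<longleftrightarrow>
     (\<forall>i. (\<integral>\<^sup>+\<omega>. ennreal_of_enat (hit_time M i \<omega>) \<partial>P i) < \<infinity>)"

end

(*
  Excursions of M from j are split according to whether they visit i.  An excursion
  j ... i ... j read cyclically from its first visit to i is a path i ... j ... i, i.e. a path of M
  up to tau_upsilon(i) under P_i; this only permutes the steps, and given the path the increments
  are independent with laws depending only on the step, so the sum of the increments keeps its
  law.  An excursion avoiding i is framed by a fixed path u from i to j and a fixed path v from j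
  back to i (irreducibility); along u and v the increments are >= r with probability at least
  c > 0, which lowers the level by at most (a + b) |r| and costs the factor c.  Summing over
  excursions, P_j(S_tau(j) > y) <= (1/c + 1) P_i(S_tau_upsilon(i) > y + (a + b) r), which is (a).
  For (b), an excursion avoiding i is repeated N times between u and v: thresholds with positive
  sum, attained with positive probability on its steps, make N rounds outweigh the losses on u
  and v.
*)

theory Submission
  imports Defs
begin

lemma emeasure_distr_restrict_space:
  assumes "E \<in> sets Q" "f \<in> measurable (restrict_space Q E) N" "A \<in> sets N"
  shows "emeasure (distr (restrict_space Q E) N f) A = emeasure Q (E \<inter> f -` A)"
proof -
  have "emeasure (distr (restrict_space Q E) N f) A
      = emeasure (restrict_space Q E) (f -` A \<inter> (E \<inter> space Q))"
    using assms(2,3) by (simp add: emeasure_distr space_restrict_space)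
  also have "\<dots> = emeasure Q (f -` A \<inter> (E \<inter> space Q))"
    using assms(1) by (subst emeasure_restrict_space) auto
  also have "f -` A \<inter> (E \<inter> space Q) = E \<inter> f -` A"
    using sets.sets_into_space[OF assms(1)] by auto
  finally show ?thesis .
qed

lemma distr_restrict_eq_of_boxes:
  fixes Q1 :: "'a measure" and Q2 :: "'b measure"
    and g1 :: "nat \<Rightarrow> 'a \<Rightarrow> real" and g2 :: "nat \<Rightarrow> 'b \<Rightarrow> real" and n :: nat
  defines "N \<equiv> PiM {1..n} (\<lambda>_. borel) :: (nat \<Rightarrow> real) measure"
  assumes "finite_measure Q1" and "finite_measure Q2" and E1: "E1 \<in> sets Q1" and E2: "E2 \<in> sets Q2"
    and g1: "\<And>k. g1 k \<in> borel_measurable Q1" and g2: "\<And>k. g2 k \<in> borel_measurable Q2"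
    and "c \<ge> 0"
    and box: "\<And>B. (\<And>k. B k \<in> sets borel) \<Longrightarrow>
       measure Q1 (E1 \<inter> {\<omega>\<in>space Q1. \<forall>k\<in>{1..n}. g1 k \<omega> \<in> B k})
       = c * measure Q2 (E2 \<inter> {\<omega>\<in>space Q2. \<forall>k\<in>{1..n}. g2 k \<omega> \<in> B k})"
  shows "distr (restrict_space Q1 E1) N (\<lambda>\<omega>. \<lambda>k\<in>{1..n}. g1 k \<omega>)
       = scale_measure (ennreal c) (distr (restrict_space Q2 E2) N (\<lambda>\<omega>. \<lambda>k\<in>{1..n}. g2 k \<omega>))"
    (is "distr _ _ ?f1 = scale_measure _ (distr _ _ ?f2)")
proof -
  interpret Q1: finite_measure Q1 by fact
  interpret Q2: finite_measure Q2 by fact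
  have f1: "?f1 \<in> measurable (restrict_space Q1 E1) N"
    and f2: "?f2 \<in> measurable (restrict_space Q2 E2) N"
    unfolding N_def by (intro measurable_restrict_space1 measurable_restrict; use g1 g2 in simp)+
  show ?thesis
  proof (rule measure_eqI_PiM_finite[where I="{1..n}" and M="\<lambda>_. borel" and A="\<lambda>_. space N"])
    show "range (\<lambda>_. space N) \<subseteq> prod_algebra {1..n} (\<lambda>_. borel)"
      unfolding N_def space_PiM using prod_algebraI_finite[of "{1..n}" "\<lambda>_. UNIV" "\<lambda>_. borel"]
      by auto
    show "emeasure (distr (restrict_space Q1 E1) N ?f1) (space N) \<noteq> \<infinity>"
      using emeasure_distr_restrict_space[OF E1 f1 sets.top] Q1.emeasure_real by simp
    fix A assume A: "\<And>k. k \<in> {1..n} \<Longrightarrow> A k \<in> sets (borel :: real measure)"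
    define B where "B k = (if k \<in> {1..n} then A k else UNIV)" for k
    have "Pi\<^sub>E {1..n} A \<in> sets N" unfolding N_def using A by (intro sets_PiM_I_finite) auto
    moreover have "E1 \<inter> ?f1 -` Pi\<^sub>E {1..n} A = E1 \<inter> {\<omega>\<in>space Q1. \<forall>k\<in>{1..n}. g1 k \<omega> \<in> B k}"
      using sets.sets_into_space[OF E1] by (auto simp: B_def Pi_iff)
    moreover have "E2 \<inter> ?f2 -` Pi\<^sub>E {1..n} A = E2 \<inter> {\<omega>\<in>space Q2. \<forall>k\<in>{1..n}. g2 k \<omega> \<in> B k}"
      using sets.sets_into_space[OF E2] by (auto simp: B_def Pi_iff)
    moreover have "B k \<in> sets borel" for k using A by (auto simp: B_def)
    ultimately show "emeasure (distr (restrict_space Q1 E1) N ?f1) (Pi\<^sub>E {1..n} A)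
        = emeasure (scale_measure (ennreal c) (distr (restrict_space Q2 E2) N ?f2)) (Pi\<^sub>E {1..n} A)"
      using box \<open>c \<ge> 0\<close> f1 f2 E1 E2
      by (simp add: emeasure_distr_restrict_space Q1.emeasure_eq_measure Q2.emeasure_eq_measure
          ennreal_mult)
  qed (simp_all add: N_def)
qed

lemma measure_sum_gt_eq_of_boxes:
  fixes Q1 :: "'a measure" and Q2 :: "'b measure"
    and g1 :: "nat \<Rightarrow> 'a \<Rightarrow> real" and g2 :: "nat \<Rightarrow> 'b \<Rightarrow> real"
  assumes "finite_measure Q1" "finite_measure Q2" and E: "E1 \<in> sets Q1" "E2 \<in> sets Q2"
    and "\<And>k. g1 k \<in> borel_measurable Q1" "\<And>k. g2 k \<in> borel_measurable Q2" and "c \<ge> 0"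
    and "\<And>B. (\<And>k. B k \<in> sets borel) \<Longrightarrow>
       measure Q1 (E1 \<inter> {\<omega>\<in>space Q1. \<forall>k\<in>{1..n}. g1 k \<omega> \<in> B k})
       = c * measure Q2 (E2 \<inter> {\<omega>\<in>space Q2. \<forall>k\<in>{1..n}. g2 k \<omega> \<in> B k})"
  shows "measure Q1 (E1 \<inter> {\<omega>\<in>space Q1. (\<Sum>k\<in>{1..n}. g1 k \<omega>) > y})
       = c * measure Q2 (E2 \<inter> {\<omega>\<in>space Q2. (\<Sum>k\<in>{1..n}. g2 k \<omega>) > y})"
proof -
  interpret Q1: finite_measure Q1 by fact
  interpret Q2: finite_measure Q2 by fact
  define N where "N = (PiM {1..n} (\<lambda>_. borel) :: (nat \<Rightarrow> real) measure)"
  define f1 where "f1 = (\<lambda>\<omega>. \<lambda>k\<in>{1..n}. g1 k \<omega>)"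
  define f2 where "f2 = (\<lambda>\<omega>. \<lambda>k\<in>{1..n}. g2 k \<omega>)"
  have f1: "f1 \<in> measurable (restrict_space Q1 E1) N"
    and f2: "f2 \<in> measurable (restrict_space Q2 E2) N"
    unfolding f1_def f2_def N_def
    by (intro measurable_restrict_space1 measurable_restrict; use assms(5,6) in simp)+
  define S where "S = {x\<in>space N. (\<Sum>k\<in>{1..n}. x k) > y}"
  have S: "S \<in> sets N" unfolding S_def N_def by measurable
  have "E1 \<inter> f1 -` S = E1 \<inter> {\<omega>\<in>space Q1. (\<Sum>k\<in>{1..n}. g1 k \<omega>) > y}"
    and "E2 \<inter> f2 -` S = E2 \<inter> {\<omega>\<in>space Q2. (\<Sum>k\<in>{1..n}. g2 k \<omega>) > y}"
    using sets.sets_into_space[OF E(1)] sets.sets_into_space[OF E(2)]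
    by (auto simp: f1_def f2_def S_def N_def space_PiM)
  moreover have "emeasure (distr (restrict_space Q1 E1) N f1) S
      = ennreal c * emeasure (distr (restrict_space Q2 E2) N f2) S"
    using distr_restrict_eq_of_boxes[OF assms] unfolding f1_def f2_def N_def
    by simp
  ultimately show ?thesis
    using emeasure_distr_restrict_space[OF E(1) f1 S] emeasure_distr_restrict_space[OF E(2) f2 S]
      \<open>c \<ge> 0\<close>
    by (simp add: Q1.emeasure_eq_measure Q2.emeasure_eq_measure ennreal_mult[symmetric])
qed

lemma sum_pos_imp_rational_minorants:
  fixes x :: "nat \<Rightarrow> real"
  assumes "(\<Sum>k\<in>{1..n}. x k) > 0"
  shows "\<exists>qs :: rat list. (\<Sum>k\<in>{1..n}. of_rat (qs!(k-1))) > (0::real)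
    \<and> (\<forall>k\<in>{1..n}. of_rat (qs!(k-1)) \<le> x k)"
proof -
  define s where "s = (\<Sum>k\<in>{1..n}. x k)"
  have s: "s > 0" using assms unfolding s_def by simp
  have n: "n \<ge> 1" using assms by (cases n) auto
  have "\<exists>\<rho>. x k - s / n < of_rat \<rho> \<and> of_rat \<rho> < x k" for k
    using of_rat_dense[of "x k - s / n" "x k"] s n by auto
  then obtain \<rho> where \<rho>: "\<And>k. x k - s / n < of_rat (\<rho> k) \<and> of_rat (\<rho> k) < x k" by metis
  define qs where "qs = map (\<lambda>k. \<rho> (Suc k)) [0..<n]"
  have qs: "qs!(k-1) = \<rho> k" if "k \<in> {1..n}" for k
    using that unfolding qs_def by auto
  have "0 = (\<Sum>k\<in>{1..n}. x k - s / n)"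
    using n unfolding sum_subtractf s_def by simp
  also have "\<dots> < (\<Sum>k\<in>{1..n}. of_rat (\<rho> k))"
    using n \<rho> by (intro sum_strict_mono) auto
  also have "\<dots> = (\<Sum>k\<in>{1..n}. of_rat (qs!(k-1)))"
    using qs by (intro sum.cong) auto
  finally show ?thesis using qs \<rho> by (auto intro!: exI[of _ qs] less_imp_le)
qed

text \<open>There are only countably many rational threshold vectors, so one of them must carry positive
  probability.\<close>

lemma measure_sum_pos_imp_thresholds:
  fixes Q :: "'a measure" and g :: "nat \<Rightarrow> 'a \<Rightarrow> real"
  assumes "finite_measure Q" and E[measurable]: "E \<in> sets Q"
    and g[measurable]: "\<And>k. g k \<in> borel_measurable Q"
    and pos: "measure Q (E \<inter> {\<omega>\<in>space Q. (\<Sum>k\<in>{1..n}. g k \<omega>) > 0}) > 0"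
  shows "\<exists>q. (\<Sum>k\<in>{1..n}. q k) > 0 \<and> measure Q (E \<inter> {\<omega>\<in>space Q. \<forall>k\<in>{1..n}. g k \<omega> \<ge> q k}) > 0"
proof (rule ccontr)
  interpret finite_measure Q by fact
  define A where "A qs = E \<inter> {\<omega>\<in>space Q. \<forall>k\<in>{1..n}. g k \<omega> \<ge> of_rat (qs!(k-1))}" for qs :: "rat list"
  define R where "R = {qs. (\<Sum>k\<in>{1..n}. of_rat (qs!(k-1))) > (0::real)}"
  assume neg: "\<not> ?thesis"
  have "A qs \<in> null_sets Q" if "qs \<in> R" for qs
    using neg[unfolded not_ex, rule_format, of "\<lambda>k. of_rat (qs!(k-1))"] that unfolding A_def R_def
    by (auto simp: null_sets_def emeasure_eq_measure not_less measure_le_0_iff)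
  then have "(\<Union>qs\<in>R. A qs) \<in> null_sets Q"
    by (intro null_sets_UN') auto
  moreover have "E \<inter> {\<omega>\<in>space Q. (\<Sum>k\<in>{1..n}. g k \<omega>) > 0} \<subseteq> (\<Union>qs\<in>R. A qs)"
    using sum_pos_imp_rational_minorants unfolding A_def R_def by fastforce
  moreover have "E \<inter> {\<omega>\<in>space Q. (\<Sum>k\<in>{1..n}. g k \<omega>) > 0} \<in> sets Q"
    by measurable
  ultimately have "E \<inter> {\<omega>\<in>space Q. (\<Sum>k\<in>{1..n}. g k \<omega>) > 0} \<in> null_sets Q"
    using null_sets_subset by blast
  then show False using pos by (simp add: null_sets_def emeasure_eq_measure)
qed

lemma sum_periodic:
  fixes q :: "nat \<Rightarrow> 'b::comm_semiring_1"
  shows "(\<Sum>s\<in>{1..N*n}. q ((s-1) mod n + 1)) = of_nat N * (\<Sum>k\<in>{1..n}. q k)"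
proof (induction N)
  case (Suc N)
  have "(\<Sum>k\<in>{1..n}. q ((N*n+k-1) mod n + 1)) = (\<Sum>k\<in>{1..n}. q k)"
  proof (intro sum.cong refl)
    fix k assume "k \<in> {1..n}"
    then have "(N*n+k-1) mod n = k-1" and "k-1 < n"
      using mod_mult_self1[of "k-1" N n] by (auto simp: add.commute)
    then show "q ((N*n+k-1) mod n + 1) = q k" using \<open>k \<in> {1..n}\<close> by simp
  qed
  then show ?case
    using Suc.IH sum.ub_add_nat[of 1 "N*n" "\<lambda>s. q ((s-1) mod n + 1)" n]
      sum.shift_bounds_cl_nat_ivl[of "\<lambda>s. q ((s-1) mod n + 1)" 1 "N*n" n]
    by (simp add: algebra_simps)
qed simp

lemma sum_atLeastAtMost_split3:
  fixes f :: "nat \<Rightarrow> 'b::comm_monoid_add"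
  shows "(\<Sum>t\<in>{1..a+m+b}. f t) = (\<Sum>t\<in>{1..a}. f t) + (\<Sum>s\<in>{1..m}. f (a+s)) + (\<Sum>k\<in>{1..b}. f (a+m+k))"
  using sum.ub_add_nat[of 1 "a+m" f b] sum.ub_add_nat[of 1 a f m]
    sum.shift_bounds_cl_nat_ivl[of f 1 a m] sum.shift_bounds_cl_nat_ivl[of f 1 "a+m" b]
  by (simp add: add.commute)

lemma ereal_divide_le_of_le_mult:
  fixes u v C :: real
  assumes "0 \<le> u" "0 \<le> v" "u \<le> C * v" "0 \<le> C"
  shows "ereal u / ereal v \<le> ereal C"
proof (cases "v = 0")
  case False
  with assms have "u / v \<le> C" by (simp add: divide_le_eq)
  then show ?thesis using False by simp
qed (use assms in \<open>simp add: divide_ereal_def\<close>)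

lemma nn_integral_count_space_Un:
  assumes "A \<inter> B = {}"
  shows "(\<integral>\<^sup>+x. f x \<partial>count_space (A \<union> B)) = (\<integral>\<^sup>+x. f x \<partial>count_space A) + (\<integral>\<^sup>+x. f x \<partial>count_space B)"
proof -
  have "(\<integral>\<^sup>+x. f x \<partial>count_space (A \<union> B)) = (\<integral>\<^sup>+x. f x * indicator (A \<union> B) x \<partial>count_space UNIV)"
    by (simp add: nn_integral_restrict_space[symmetric] restrict_count_space)
  also have "\<dots> = (\<integral>\<^sup>+x. f x * indicator A x + f x * indicator B x \<partial>count_space UNIV)"
    using assms by (intro nn_integral_cong) (auto split: split_indicator)
  also have "\<dots> = (\<integral>\<^sup>+x. f x \<partial>count_space A) + (\<integral>\<^sup>+x. f x \<partial>count_space B)"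
    by (simp add: nn_integral_add nn_integral_restrict_space[symmetric] restrict_count_space)
  finally show ?thesis .
qed

lemma prod_pos_imp_factor_pos:
  fixes f :: "'a \<Rightarrow> 'b::linordered_idom"
  assumes "finite A" "\<And>k. k \<in> A \<Longrightarrow> f k \<ge> 0" "prod f A > 0" "k \<in> A"
  shows "f k > 0"
proof -
  have "f k \<noteq> 0"
  proof
    assume "f k = 0"
    then have "prod f A = 0" using assms(1,4) by (intro prod_zero) auto
    then show False using assms(3) by simp
  qed
  with assms(2,4) show ?thesis by (simp add: less_le)
qed

lemma minus_one_mod_plus_one:
  fixes s n :: nat
  assumes "1 \<le> s" "1 \<le> n"
  shows "(s - 1) mod n + 1 = (if s mod n = 0 then n else s mod n)"
proof -
  obtain s' where s: "s = Suc s'" using assms(1) by (cases s) auto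
  have "s' mod n < n" using assms(2) by simp
  then show ?thesis unfolding s mod_Suc by auto
qed

section \<open>Stopping times along sample paths\<close>

lemma hit_time_eqI:
  assumes "1 \<le> h" "M h \<omega> = j" "\<And>k. 1 \<le> k \<Longrightarrow> k < h \<Longrightarrow> M k \<omega> \<noteq> j"
  shows "hit_time M j \<omega> = enat h"
proof -
  have "(LEAST n. 1 \<le> n \<and> M n \<omega> = j) = h"
    by (rule Least_equality) (use assms in \<open>auto simp: not_less[symmetric]\<close>)
  then show ?thesis using assms unfolding hit_time_def by auto
qed

lemma hit_time_enatD:
  assumes "hit_time M j \<omega> = enat h"
  shows "1 \<le> h" "M h \<omega> = j" "\<And>k. 1 \<le> k \<Longrightarrow> k < h \<Longrightarrow> M k \<omega> \<noteq> j"
proof -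
  have ex: "\<exists>n\<ge>1. M n \<omega> = j" using assms unfolding hit_time_def by (auto split: if_splits)
  then have h: "h = (LEAST n. 1 \<le> n \<and> M n \<omega> = j)" using assms unfolding hit_time_def by auto
  from ex have "1 \<le> h \<and> M h \<omega> = j" unfolding h by (rule LeastI_ex)
  then show "1 \<le> h" "M h \<omega> = j" by auto
  show "M k \<omega> \<noteq> j" if "1 \<le> k" "k < h" for k
    using not_less_Least[of k "\<lambda>n. 1 \<le> n \<and> M n \<omega> = j"] that unfolding h by auto
qed

lemma ret_time_SucE:
  assumes "ret_time M i (Suc n) \<omega> = enat m"
  obtains m0 where "ret_time M i n \<omega> = enat m0" "m0 < m" "M m \<omega> = i"
proof -
  obtain m0 where m0: "ret_time M i n \<omega> = enat m0"
    using assms by (cases "ret_time M i n \<omega>") auto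
  with assms have "\<exists>k>m0. M k \<omega> = i" and "m = (LEAST k. m0 < k \<and> M k \<omega> = i)"
    by (auto split: if_splits)
  then have "m0 < m \<and> M m \<omega> = i" by (metis (mono_tags, lifting) LeastI_ex)
  with m0 show ?thesis using that by blast
qed

lemma ret_time_ge: "ret_time M i n \<omega> = enat m \<Longrightarrow> n \<le> m"
proof (induction n arbitrary: m)
  case (Suc n)
  from Suc.prems obtain m0 where "ret_time M i n \<omega> = enat m0" "m0 < m"
    by (rule ret_time_SucE)
  with Suc.IH show ?case by fastforce
qed simp

lemma ups_time_eqI:
  assumes hit: "hit_time M j \<omega> = enat h" and "h < L" and "M L \<omega> = i"
    and nv: "\<And>k. h < k \<Longrightarrow> k < L \<Longrightarrow> M k \<omega> \<noteq> i"
  shows "ups_time M i j \<omega> = enat L"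
proof -
  define Q where "Q n \<longleftrightarrow> 1 \<le> n \<and> ret_time M i n \<omega> > hit_time M j \<omega>" for n
  have "Q (Suc h)"
    using ret_time_ge[of M i "Suc h" \<omega>] unfolding Q_def hit by (cases "ret_time M i (Suc h) \<omega>") auto
  then have ex: "\<exists>n\<ge>1. ret_time M i n \<omega> > hit_time M j \<omega>" unfolding Q_def by auto
  define n0 where "n0 = (LEAST n. Q n)"
  have Qn0: "Q n0" unfolding n0_def by (rule LeastI) fact
  then obtain n1 where n1: "n0 = Suc n1" unfolding Q_def by (cases n0) auto
  have "ret_time M i n1 \<omega> \<le> enat h"
  proof (cases n1)
    case (Suc n2)
    have "\<not> Q n1" using not_less_Least[of n1 Q] unfolding n0_def[symmetric] n1 by auto
    then show ?thesis unfolding Q_def using Suc hit by (auto simp: not_less)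
  qed (simp add: zero_enat_def)
  then obtain m where m: "ret_time M i n1 \<omega> = enat m" "m \<le> h"
    by (cases "ret_time M i n1 \<omega>") auto
  have exk: "\<exists>k>m. M k \<omega> = i" using assms m by (intro exI[of _ L]) auto
  define q where "q = (LEAST k. m < k \<and> M k \<omega> = i)"
  have rq: "ret_time M i n0 \<omega> = enat q" unfolding n1 q_def using m exk by simp
  have q: "m < q \<and> M q \<omega> = i" unfolding q_def by (rule LeastI_ex) (use exk in auto)
  have "q \<le> L" unfolding q_def by (rule Least_le) (use m assms in auto)
  moreover have "h < q" using Qn0 rq hit unfolding Q_def by auto
  ultimately have "q = L" using nv q by (cases "q < L") auto
  have "ups_time M i j \<omega> = ret_time M i n0 \<omega>"
    unfolding ups_time_def n0_def Q_def using ex by simp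
  then show ?thesis using rq \<open>q = L\<close> by simp
qed

lemma ups_time_enatD:
  assumes "ups_time M i j \<omega> = enat L"
  obtains h where "hit_time M j \<omega> = enat h" "h < L" "M L \<omega> = i"
    "\<And>k. h < k \<Longrightarrow> k < L \<Longrightarrow> M k \<omega> \<noteq> i"
proof -
  have ex: "\<exists>n\<ge>1. ret_time M i n \<omega> > hit_time M j \<omega>"
    using assms unfolding ups_time_def by (auto split: if_splits)
  define n0 where "n0 = (LEAST n. 1 \<le> n \<and> ret_time M i n \<omega> > hit_time M j \<omega>)"
  have L: "ret_time M i n0 \<omega> = enat L" using assms ex unfolding ups_time_def n0_def by simp
  have n0: "1 \<le> n0 \<and> ret_time M i n0 \<omega> > hit_time M j \<omega>" unfolding n0_def by (rule LeastI_ex) fact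
  then obtain h where h: "hit_time M j \<omega> = enat h" "h < L" using L by (cases "hit_time M j \<omega>") auto
  obtain n1 where "n0 = Suc n1" using n0 by (cases n0) auto
  then have "M L \<omega> = i" using L ret_time_SucE[of M i n1 \<omega> L] by blast
  define L' where "L' = (LEAST k. h < k \<and> M k \<omega> = i)"
  have L': "h < L' \<and> M L' \<omega> = i" unfolding L'_def by (rule LeastI[of _ L]) (use h \<open>M L \<omega> = i\<close> in auto)
  have nv: "M k \<omega> \<noteq> i" if "h < k" "k < L'" for k
    using not_less_Least[of k "\<lambda>k. h < k \<and> M k \<omega> = i"] that unfolding L'_def by auto
  have "L = L'" using ups_time_eqI[OF h(1)] L' nv assms by fastforce
  then show ?thesis using that h \<open>M L \<omega> = i\<close> nv by blast
qed

definition first_passage_path :: "'s \<Rightarrow> 's list \<Rightarrow> bool" where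
  "first_passage_path j w \<longleftrightarrow>
     (\<exists>n\<ge>1. length w = Suc n \<and> w!n = j \<and> (\<forall>k. 1 \<le> k \<longrightarrow> k < n \<longrightarrow> w!k \<noteq> j))"

definition excursion :: "'s \<Rightarrow> 's list \<Rightarrow> bool" where
  "excursion j w \<longleftrightarrow> first_passage_path j w \<and> w!0 = j"

text \<open>The paths of \<open>M\<close> up to time \<open>\<tau>\<^sub>\<upsilon>(i)\<close>: \<open>j\<close> is first hit at time \<open>h\<close>, and \<open>i\<close> is then
  first visited at the final time \<open>L\<close>.\<close>

definition ups_path :: "'s \<Rightarrow> 's \<Rightarrow> 's list \<Rightarrow> bool" where
  "ups_path i j w \<longleftrightarrow> (\<exists>h L. length w = Suc L \<and> 1 \<le> h \<and> h < L \<and>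
     w!h = j \<and> (\<forall>k. 1 \<le> k \<longrightarrow> k < h \<longrightarrow> w!k \<noteq> j) \<and>
     w!L = i \<and> (\<forall>k. h < k \<longrightarrow> k < L \<longrightarrow> w!k \<noteq> i))"

lemma first_passage_pathE:
  assumes "first_passage_path j w"
  obtains n where "1 \<le> n" "length w = Suc n" "w!n = j" "\<And>k. 1 \<le> k \<Longrightarrow> k < n \<Longrightarrow> w!k \<noteq> j"
  using assms unfolding first_passage_path_def by blast

lemma hit_time_first_passage_path:
  assumes "first_passage_path j w" "\<And>k. k < length w \<Longrightarrow> M k \<omega> = w!k"
  shows "hit_time M j \<omega> = enat (length w - 1)"
  using assms by (elim first_passage_pathE) (auto intro!: hit_time_eqI)

lemma first_passage_path_hit_time:
  assumes "hit_time M j \<omega> = enat n"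
  shows "first_passage_path j (map (\<lambda>k. M k \<omega>) [0..<Suc n])"
  unfolding first_passage_path_def using hit_time_enatD[OF assms]
  by (intro exI[of _ n]) (auto simp del: upt_Suc)

lemma ups_time_ups_path:
  assumes "ups_path i j w" "\<And>k. k < length w \<Longrightarrow> M k \<omega> = w!k"
  shows "ups_time M i j \<omega> = enat (length w - 1)"
proof -
  obtain h L where hL: "length w = Suc L" "1 \<le> h" "h < L" "w!h = j"
    "\<forall>k. 1 \<le> k \<longrightarrow> k < h \<longrightarrow> w!k \<noteq> j" "w!L = i" "\<forall>k. h < k \<longrightarrow> k < L \<longrightarrow> w!k \<noteq> i"
    using assms(1) unfolding ups_path_def by blast
  have "hit_time M j \<omega> = enat h"
    by (rule hit_time_eqI) (use hL assms(2) in auto)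
  from ups_time_eqI[OF this] show ?thesis using hL assms(2) by auto
qed

lemma ups_path_ups_time:
  assumes "ups_time M i j \<omega> = enat L"
  shows "ups_path i j (map (\<lambda>k. M k \<omega>) [0..<Suc L])"
proof -
  obtain h where h: "hit_time M j \<omega> = enat h" "h < L" "M L \<omega> = i"
    "\<And>k. h < k \<Longrightarrow> k < L \<Longrightarrow> M k \<omega> \<noteq> i"
    using ups_time_enatD[OF assms] by blast
  show ?thesis using h hit_time_enatD[OF h(1)]
    unfolding ups_path_def by (intro exI[of _ h] exI[of _ L]) (auto simp del: upt_Suc)
qed

section \<open>Rotating excursions\<close>

lemma excursionE:
  assumes "excursion j w"
  obtains n where "length w = Suc n" "1 \<le> n" "w!0 = j" "w!n = j" "\<forall>k. 1 \<le> k \<longrightarrow> k < n \<longrightarrow> w!k \<noteq> j"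
  using assms unfolding excursion_def by (auto elim: first_passage_pathE)

definition first_visit :: "'s \<Rightarrow> 's list \<Rightarrow> nat" where
  "first_visit i w = (LEAST k. k < length w \<and> w!k = i)"

lemma first_visit_correct:
  assumes "i \<in> set w"
  shows "first_visit i w < length w" "w ! first_visit i w = i" "\<And>k. k < first_visit i w \<Longrightarrow> w!k \<noteq> i"
proof -
  have ex: "\<exists>k. k < length w \<and> w!k = i" using assms by (auto simp: in_set_conv_nth)
  show "first_visit i w < length w" "w ! first_visit i w = i"
    using LeastI_ex[OF ex] unfolding first_visit_def by auto
  show "w!k \<noteq> i" if "k < first_visit i w" for k
    using not_less_Least[of k "\<lambda>k. k < length w \<and> w!k = i"] that \<open>first_visit i w < length w\<close>
    unfolding first_visit_def by auto
qed

lemma first_visit_excursion: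
  assumes "excursion j w" "i \<in> set w" "i \<noteq> j"
  shows "1 \<le> first_visit i w" "first_visit i w < length w - 1"
proof -
  obtain n where "length w = Suc n" "w!0 = j" "w!n = j"
    using assms(1) by (rule excursionE)
  moreover note first_visit_correct[OF assms(2)]
  ultimately show "1 \<le> first_visit i w" "first_visit i w < length w - 1"
    using assms(3) by (metis One_nat_def Suc_leI diff_Suc_1 less_Suc_eq neq0_conv)+
qed

text \<open>An excursion \<open>j \<dots> i \<dots> j\<close> from \<open>j\<close> that visits \<open>i\<close>, read cyclically from its first visit to \<open>i\<close>:
  the result runs from \<open>i\<close> to \<open>j\<close> and then back to \<open>i\<close>, i.e.\ it is a path up to \<open>\<tau>\<^sub>\<upsilon>(i)\<close>.\<close>

definition rotate_to :: "'s \<Rightarrow> 's list \<Rightarrow> 's list" where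
  "rotate_to i w = drop (first_visit i w) w @ tl (take (Suc (first_visit i w)) w)"

lemma length_rotate_to: "i \<in> set w \<Longrightarrow> length (rotate_to i w) = length w"
  using first_visit_correct(1)[of i w] by (simp add: rotate_to_def)

lemma nth_rotate_to:
  assumes "length w = Suc n" "first_visit i w = a" "a < n" "t \<le> n"
  shows "rotate_to i w ! t = (if t \<le> n - a then w!(t+a) else w!(t-(n-a)))"
  using assms by (cases "t \<le> n - a")
    (auto simp: rotate_to_def nth_append nth_tl intro!: arg_cong[where f="(!) w"])

lemma rotate_to_first_hit:
  assumes "excursion j w" "i \<in> set w" "i \<noteq> j" "length w = Suc n"
  shows "rotate_to i w ! (n - first_visit i w) = j"
    and "\<And>t::nat. 1 \<le> t \<Longrightarrow> t < n - first_visit i w \<Longrightarrow> rotate_to i w ! t \<noteq> j"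
proof -
  obtain n' where w: "length w = Suc n'" "1 \<le> n'" "w!0 = j" "w!n' = j"
    "\<forall>k. 1 \<le> k \<longrightarrow> k < n' \<longrightarrow> w!k \<noteq> j"
    using assms(1) by (rule excursionE)
  have "n' = n" using w(1) assms(4) by simp
  note a = first_visit_excursion[OF assms(1-3)]
  note rot = nth_rotate_to[OF assms(4) refl, of i]
  show "rotate_to i w ! (n - first_visit i w) = j"
    using rot[of "n - first_visit i w"] a w \<open>n' = n\<close> by auto
  show "rotate_to i w ! t \<noteq> j" if "1 \<le> t" "t < n - first_visit i w" for t :: nat
    using rot[of t] w(5)[rule_format, of "t + first_visit i w"] a w(1) \<open>n' = n\<close> that by auto
qed

lemma ups_path_rotate_to:
  assumes "excursion j w" "i \<in> set w" "i \<noteq> j"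
  shows "ups_path i j (rotate_to i w)"
proof -
  obtain n where w: "length w = Suc n" using assms(1) by (auto elim: excursionE)
  define a where "a = first_visit i w"
  note a = first_visit_excursion[OF assms, folded a_def] first_visit_correct[OF assms(2), folded a_def]
  note rot = nth_rotate_to[OF w a_def[symmetric]]
  have "rotate_to i w ! k \<noteq> i" if "n - a < k" "k < n" for k
    using rot[of k] a(5)[of "k - (n-a)"] a w that by auto
  then show ?thesis
    unfolding ups_path_def
    using rotate_to_first_hit[OF assms w, folded a_def] w a rot length_rotate_to[OF assms(2)]
    by (intro exI[of _ "n - a"] exI[of _ n]) auto
qed

lemma inj_on_rotate_to:
  assumes "i \<noteq> j"
  shows "inj_on (rotate_to i) {w. excursion j w \<and> i \<in> set w}"
proof (rule inj_onI)
  fix w1 w2 assume "w1 \<in> {w. excursion j w \<and> i \<in> set w}" "w2 \<in> {w. excursion j w \<and> i \<in> set w}"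
    and eq: "rotate_to i w1 = rotate_to i w2"
  then have e: "excursion j w1" "i \<in> set w1" "excursion j w2" "i \<in> set w2" by auto
  obtain n1 n2 where w1: "length w1 = Suc n1" "w1!0 = j" and w2: "length w2 = Suc n2" "w2!0 = j"
    using e(1,3) by (auto elim!: excursionE)
  define a1 where "a1 = first_visit i w1"
  define a2 where "a2 = first_visit i w2"
  note a1 = first_visit_excursion[OF e(1,2) assms, folded a1_def]
  note a2 = first_visit_excursion[OF e(3,4) assms, folded a2_def]
  note rot1 = nth_rotate_to[OF w1(1) a1_def[symmetric]]
  note rot2 = nth_rotate_to[OF w2(1) a2_def[symmetric]]
  have n: "n1 = n2"
    using eq length_rotate_to[OF e(2)] length_rotate_to[OF e(4)] w1(1) w2(1) by auto
  text \<open>Both rotations first hit \<open>j\<close> at time \<open>n - a\<close>, so the rotation offsets agree.\<close>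
  have a: "a1 = a2"
    using rotate_to_first_hit[OF e(1,2) assms w1(1), folded a1_def]
      rotate_to_first_hit[OF e(3,4) assms w2(1), folded a2_def] eq n a1 a2 w1(1) w2(1)
    by (cases a1 a2 rule: linorder_cases) auto
  show "w1 = w2"
  proof (rule nth_equalityI)
    show "length w1 = length w2" using w1(1) w2(1) n by simp
    fix t assume t: "t < length w1"
    consider "t = 0" | "a1 \<le> t" | "1 \<le> t" "t < a1" by linarith
    then show "w1 ! t = w2 ! t"
    proof cases
      case 2
      then have "rotate_to i w1 ! (t - a1) = w1 ! t" "rotate_to i w2 ! (t - a1) = w2 ! t"
        using rot1[of "t - a1"] rot2[of "t - a1"] t w1(1) a1 n a by auto
      then show ?thesis using eq by simp
    next
      case 3
      then have "rotate_to i w1 ! (t + (n1 - a1)) = w1 ! t" "rotate_to i w2 ! (t + (n1 - a1)) = w2 ! t"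
        using rot1[of "t + (n1 - a1)"] rot2[of "t + (n1 - a1)"] w1(1) a1 n a by auto
      then show ?thesis using eq by simp
    qed (use w1(2) w2(2) in simp)
  qed
qed

section \<open>Path events of a Markov random walk\<close>

locale mrw =
  fixes P :: "'s::countable \<Rightarrow> 'a measure" and p :: "'s \<Rightarrow> 's \<Rightarrow> real"
    and K :: "'s \<Rightarrow> 's \<Rightarrow> real measure" and M :: "nat \<Rightarrow> 'a \<Rightarrow> 's"
    and X :: "nat \<Rightarrow> 'a \<Rightarrow> real"
  assumes MRW: "MRW P p K M X"
begin

lemma prob_space_P: "prob_space (P i)"
  using MRW by (simp add: MRW_def)

lemma finite_measure_P: "finite_measure (P i)"
  using prob_space_P prob_space.finite_measure by blast

lemma emeasure_P: "emeasure (P i) A = ennreal (measure (P i) A)"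
  using finite_measure_P finite_measure.emeasure_eq_measure by blast

lemma M_measurable[measurable]: "M n \<in> measurable (P i) (count_space UNIV)"
  using MRW by (simp add: MRW_def)

lemma X_measurable[measurable]: "X n \<in> borel_measurable (P i)"
  using MRW by (simp add: MRW_def)

lemma prob_space_K: "prob_space (K s t)"
  using MRW by (simp add: MRW_def)

lemma sets_K: "sets (K s t) = sets borel"
  using MRW by (simp add: MRW_def)

lemma measure_K_UNIV: "measure (K s t) UNIV = 1"
proof -
  have "space (K s t) = UNIV" using sets_K[of s t] sets_eq_imp_space_eq by fastforce
  then show ?thesis using prob_space.prob_space[OF prob_space_K, of s t] by simp
qed

definition path_event :: "'s \<Rightarrow> 's list \<Rightarrow> 'a set" where
  "path_event i w = {\<omega> \<in> space (P i). \<forall>k<length w. M k \<omega> = w!k}"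

definition path_sum_gt :: "'s \<Rightarrow> 's list \<Rightarrow> real \<Rightarrow> 'a set" where
  "path_sum_gt i w y = path_event i w \<inter> {\<omega> \<in> space (P i). Ssum X (length w - 1) \<omega> > y}"

lemma sets_path_event[measurable]: "path_event i w \<in> sets (P i)"
proof -
  have "path_event i w = {\<omega> \<in> space (P i). \<forall>k\<in>{..<length w}. M k \<omega> = w!k}"
    by (auto simp: path_event_def)
  also have "\<dots> \<in> sets (P i)" by measurable
  finally show ?thesis .
qed

lemma sets_path_sum_gt[measurable]: "path_sum_gt i w y \<in> sets (P i)"
  unfolding path_sum_gt_def Ssum_def by measurable

lemma path_event_eq_map: "\<omega> \<in> path_event i w \<Longrightarrow> w = map (\<lambda>k. M k \<omega>) [0..<length w]"
  by (auto simp: path_event_def intro!: nth_equalityI)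

lemma measure_path_box:
  assumes "length w = Suc n" "\<And>k. k \<in> {1..n} \<Longrightarrow> B k \<in> sets borel"
  shows "measure (P i) (path_event i w \<inter> {\<omega>\<in>space (P i). \<forall>k\<in>{1..n}. X k \<omega> \<in> B k})
    = (if w!0 = i then 1 else 0) * (\<Prod>k\<in>{1..n}. p (w!(k-1)) (w!k) * measure (K (w!(k-1)) (w!k)) (B k))"
proof -
  define B' where "B' k = (if k \<in> {1..n} then B k else UNIV)" for k
  have "path_event i w \<inter> {\<omega>\<in>space (P i). \<forall>k\<in>{1..n}. X k \<omega> \<in> B k}
     = {\<omega> \<in> space (P i). (\<forall>k\<le>n. M k \<omega> = w!k) \<and> (\<forall>k\<in>{1..n}. X k \<omega> \<in> B' k)}"
    using assms(1) by (auto simp: path_event_def B'_def less_Suc_eq_le)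
  moreover have "B' k \<in> sets borel" for k using assms(2) by (auto simp: B'_def)
  moreover have "(\<Prod>k\<in>{1..n}. p (w!(k-1)) (w!k) * measure (K (w!(k-1)) (w!k)) (B k))
     = (\<Prod>k\<in>{1..n}. p (w!(k-1)) (w!k) * measure (K (w!(k-1)) (w!k)) (B' k))"
    by (intro prod.cong) (auto simp: B'_def)
  ultimately show ?thesis using MRW unfolding MRW_def by auto
qed

lemma measure_path_event:
  assumes "length w = Suc n"
  shows "measure (P i) (path_event i w) = (if w!0 = i then 1 else 0) * (\<Prod>k\<in>{1..n}. p (w!(k-1)) (w!k))"
  using measure_path_box[OF assms, of "\<lambda>_. UNIV" i] by (simp add: measure_K_UNIV)

lemma transition_nonneg: "p s t \<ge> 0"
  using measure_path_event[of "[s,t]" 1 s] measure_nonneg[of "P s" "path_event s [s, t]"] by simp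

definition step_prob_ge :: "'s \<Rightarrow> 's \<Rightarrow> real \<Rightarrow> real" where
  "step_prob_ge s t r = p s t * measure (K s t) {r..}"

lemma step_prob_ge_nonneg: "step_prob_ge s t r \<ge> 0"
  by (simp add: step_prob_ge_def transition_nonneg)

lemma step_prob_ge_pos:
  assumes "p s t > 0"
  shows "\<exists>r. step_prob_ge s t r > 0"
proof (rule ccontr)
  interpret prob_space "K s t" by (rule prob_space_K)
  assume "\<not> ?thesis"
  then have "measure (K s t) {r..} = 0" for r
    using assms measure_nonneg[of "K s t" "{r..}"]
    by (auto simp: step_prob_ge_def not_less mult_le_0_iff intro: order.antisym)
  then have "(\<Union>m::nat. {- real m..}) \<in> null_sets (K s t)"
    using sets_K[of s t] by (intro null_sets_UN) (auto simp: null_sets_def emeasure_eq_measure)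
  moreover have "(\<Union>m::nat. {- real m..}) = UNIV"
  proof safe
    fix x :: real
    obtain m :: nat where "- x \<le> real m" using real_arch_simple by blast
    then show "x \<in> (\<Union>m::nat. {- real m..})" by (auto intro!: exI[of _ m])
  qed auto
  ultimately show False
    using measure_K_UNIV[of s t] sets_eq_imp_space_eq[OF sets_K[of s t]]
    by (auto simp: null_sets_def emeasure_eq_measure)
qed

lemma step_prob_ge_antimono: "r' \<le> r \<Longrightarrow> step_prob_ge s t r \<le> step_prob_ge s t r'"
  unfolding step_prob_ge_def using sets_K[of s t] transition_nonneg[of s t]
  by (intro mult_left_mono finite_measure.finite_measure_mono[OF prob_space.finite_measure[OF prob_space_K]])
    auto

lemma exists_step_threshold:
  assumes "finite F" "\<And>s t. (s, t) \<in> F \<Longrightarrow> p s t > 0"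
  shows "\<exists>r\<le>0. \<forall>(s, t)\<in>F. step_prob_ge s t r > 0"
proof -
  obtain R where R: "\<And>s t. p s t > 0 \<Longrightarrow> step_prob_ge s t (R s t) > 0"
    using step_prob_ge_pos by metis
  define r where "r = Min (insert 0 ((\<lambda>(s, t). R s t) ` F))"
  have "r \<le> 0" and "r \<le> R s t" if "(s, t) \<in> F" for s t
    using assms(1) that unfolding r_def by (auto intro: Min_le)
  then show ?thesis using assms(1,2)
    by (intro exI[of _ r]) (auto intro: order.strict_trans2[OF R step_prob_ge_antimono] simp: r_def)
qed

lemma S_at_gt_hit_time_eq:
  "S_at_gt (P j) X (hit_time M j) y = (\<Union>w\<in>{w. first_passage_path j w}. path_sum_gt j w y)"
proof (intro set_eqI iffI)
  fix \<omega> assume "\<omega> \<in> S_at_gt (P j) X (hit_time M j) y"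
  then obtain n where \<omega>: "\<omega> \<in> space (P j)" "hit_time M j \<omega> = enat n" "Ssum X n \<omega> > y"
    unfolding S_at_gt_def by (cases "hit_time M j \<omega>") auto
  then have "\<omega> \<in> path_sum_gt j (map (\<lambda>k. M k \<omega>) [0..<Suc n]) y"
    unfolding path_sum_gt_def path_event_def by (auto simp del: upt_Suc)
  with first_passage_path_hit_time[OF \<omega>(2)]
  show "\<omega> \<in> (\<Union>w\<in>{w. first_passage_path j w}. path_sum_gt j w y)" by blast
qed (auto simp: S_at_gt_def path_sum_gt_def path_event_def hit_time_first_passage_path)

lemma S_at_gt_ups_time_eq:
  "S_at_gt (P i) X (ups_time M i j) y = (\<Union>w\<in>{w. ups_path i j w}. path_sum_gt i w y)"
proof (intro set_eqI iffI)
  fix \<omega> assume "\<omega> \<in> S_at_gt (P i) X (ups_time M i j) y"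
  then obtain L where \<omega>: "\<omega> \<in> space (P i)" "ups_time M i j \<omega> = enat L" "Ssum X L \<omega> > y"
    unfolding S_at_gt_def by (cases "ups_time M i j \<omega>") auto
  then have "\<omega> \<in> path_sum_gt i (map (\<lambda>k. M k \<omega>) [0..<Suc L]) y"
    unfolding path_sum_gt_def path_event_def by (auto simp del: upt_Suc)
  with ups_path_ups_time[OF \<omega>(2)] show "\<omega> \<in> (\<Union>w\<in>{w. ups_path i j w}. path_sum_gt i w y)"
    by blast
qed (auto simp: S_at_gt_def path_sum_gt_def path_event_def ups_time_ups_path)

lemma sets_S_at_gt_ups_time[measurable]: "S_at_gt (P i) X (ups_time M i j) y \<in> sets (P i)"
  unfolding S_at_gt_ups_time_eq by (intro sets.countable_UN'') (auto intro: countableI_type)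

text \<open>The random time \<open>T\<close> reads the length of the path off \<open>\<omega>\<close>, so distinct paths give disjoint
  events.\<close>

lemma emeasure_UN_path_sum_gt:
  assumes T: "\<And>w \<omega>. w \<in> W \<Longrightarrow> \<omega> \<in> path_event i w \<Longrightarrow> T \<omega> = enat (length w - 1)"
    and "[] \<notin> W"
  shows "emeasure (P i) (\<Union>w\<in>W. path_sum_gt i w y)
    = (\<integral>\<^sup>+w. emeasure (P i) (path_sum_gt i w y) \<partial>count_space W)"
proof (rule emeasure_UN_countable)
  show "disjoint_family_on (\<lambda>w. path_sum_gt i w y) W"
  proof (unfold disjoint_family_on_def, intro ballI impI, rule ccontr)
    fix w1 w2 assume w: "w1 \<in> W" "w2 \<in> W" "w1 \<noteq> w2"
      and "path_sum_gt i w1 y \<inter> path_sum_gt i w2 y \<noteq> {}"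
    then obtain \<omega> where \<omega>: "\<omega> \<in> path_event i w1" "\<omega> \<in> path_event i w2"
      unfolding path_sum_gt_def by blast
    have "length w1 = length w2"
      using T[OF w(1) \<omega>(1)] T[OF w(2) \<omega>(2)] w(1,2) \<open>[] \<notin> W\<close>
      by (cases w1; cases w2) auto
    then show False using path_event_eq_map[OF \<omega>(1)] path_event_eq_map[OF \<omega>(2)] w(3) by metis
  qed
qed (auto intro: countableI_type)

lemma emeasure_hit_tail:
  "emeasure (P j) (S_at_gt (P j) X (hit_time M j) y)
    = (\<integral>\<^sup>+w. emeasure (P j) (path_sum_gt j w y) \<partial>count_space {w. excursion j w})"
proof -
  have "emeasure (P j) (S_at_gt (P j) X (hit_time M j) y)
    = (\<integral>\<^sup>+w. emeasure (P j) (path_sum_gt j w y) \<partial>count_space {w. first_passage_path j w})"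
    unfolding S_at_gt_hit_time_eq
    by (rule emeasure_UN_path_sum_gt[where T="hit_time M j"])
      (auto simp: path_event_def hit_time_first_passage_path first_passage_path_def)
  also have "\<dots> = (\<integral>\<^sup>+w. emeasure (P j) (path_sum_gt j w y) \<partial>count_space {w. excursion j w})"
  proof (rule nn_integral_count_space_eq)
    fix w assume "w \<in> {w. first_passage_path j w} - {w. excursion j w}"
    then have "w \<noteq> []" "w!0 \<noteq> j" by (auto simp: excursion_def first_passage_path_def)
    then have "measure (P j) (path_event j w) = 0"
      using measure_path_event[of w "length w - 1" j] by simp
    then show "emeasure (P j) (path_sum_gt j w y) = 0"
      using emeasure_mono[of "path_sum_gt j w y" "path_event j w" "P j"]
      by (auto simp: path_sum_gt_def emeasure_P)
  qed (auto simp: excursion_def)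
  finally show ?thesis .
qed

lemma emeasure_ups_tail:
  "emeasure (P i) (S_at_gt (P i) X (ups_time M i j) y)
    = (\<integral>\<^sup>+w. emeasure (P i) (path_sum_gt i w y) \<partial>count_space {w. ups_path i j w})"
  unfolding S_at_gt_ups_time_eq
  by (rule emeasure_UN_path_sum_gt[where T="ups_time M i j"])
    (auto simp: path_event_def ups_time_ups_path ups_path_def)

lemma nn_integral_le_ups_tail:
  assumes "inj_on \<Phi> W" "\<And>w. w \<in> W \<Longrightarrow> ups_path i j (\<Phi> w)"
  shows "(\<integral>\<^sup>+w. emeasure (P i) (path_sum_gt i (\<Phi> w) y) \<partial>count_space W)
    \<le> emeasure (P i) (S_at_gt (P i) X (ups_time M i j) y)"
proof -
  have "(\<integral>\<^sup>+w. emeasure (P i) (path_sum_gt i (\<Phi> w) y) \<partial>count_space W)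
      = (\<integral>\<^sup>+w. emeasure (P i) (path_sum_gt i w y) \<partial>count_space (\<Phi> ` W))"
    using assms(1) by (intro nn_integral_bij_count_space inj_on_imp_bij_betw)
  also have "\<dots> \<le> (\<integral>\<^sup>+w. emeasure (P i) (path_sum_gt i w y) \<partial>count_space {w. ups_path i j w})"
    using assms(2) by (auto simp: nn_integral_count_space_indicator intro!: nn_integral_mono
        split: split_indicator)
  finally show ?thesis unfolding emeasure_ups_tail .
qed

text \<open>Given the path, the increments are independent with laws depending only on the step, so the
  increments along the embedded steps have the joint law of those along \<open>w\<close>, independently of
  the remaining steps \<open>R\<close>.\<close>

lemma measure_path_box_embed:
  fixes \<sigma> :: "nat \<Rightarrow> nat" and n L :: nat
  defines "R \<equiv> {1..L} - \<sigma> ` {1..n}"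
  assumes w: "length w = Suc n" "w!0 = j" and w': "length w' = Suc L" "w'!0 = i"
    and \<sigma>: "inj_on \<sigma> {1..n}" "\<sigma> ` {1..n} \<subseteq> {1..L}"
    and steps: "\<And>k. k \<in> {1..n} \<Longrightarrow> w'!(\<sigma> k - 1) = w!(k-1) \<and> w'!(\<sigma> k) = w!k"
    and B: "\<And>k. B k \<in> sets borel"
  shows "measure (P i) ((path_event i w' \<inter> {\<omega>\<in>space (P i). \<forall>t\<in>R. X t \<omega> \<ge> r})
           \<inter> {\<omega>\<in>space (P i). \<forall>k\<in>{1..n}. X (\<sigma> k) \<omega> \<in> B k})
     = (\<Prod>t\<in>R. step_prob_ge (w'!(t-1)) (w'!t) r)
       * measure (P j) (path_event j w \<inter> {\<omega>\<in>space (P j). \<forall>k\<in>{1..n}. X k \<omega> \<in> B k})"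
proof -
  define B' where "B' t = (if t \<in> \<sigma> ` {1..n} then B (the_inv_into {1..n} \<sigma> t) else {r..})" for t
  define F where "F t = p (w'!(t-1)) (w'!t) * measure (K (w'!(t-1)) (w'!t)) (B' t)" for t
  have B'\<sigma>: "B' (\<sigma> k) = B k" if "k \<in> {1..n}" for k
    using that \<sigma>(1) by (simp add: B'_def the_inv_into_f_f)
  have "(\<forall>t\<in>{1..L}. X t \<omega> \<in> B' t) \<longleftrightarrow> (\<forall>t\<in>R. X t \<omega> \<ge> r) \<and> (\<forall>k\<in>{1..n}. X (\<sigma> k) \<omega> \<in> B k)" for \<omega>
  proof -
    have "{1..L} = R \<union> \<sigma> ` {1..n}" using \<sigma>(2) by (auto simp: R_def)
    then have "(\<forall>t\<in>{1..L}. X t \<omega> \<in> B' t)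
        \<longleftrightarrow> (\<forall>t\<in>R. X t \<omega> \<in> B' t) \<and> (\<forall>k\<in>{1..n}. X (\<sigma> k) \<omega> \<in> B' (\<sigma> k))"
      by auto
    moreover have "B' t = {r..}" if "t \<in> R" for t using that by (simp add: B'_def R_def)
    ultimately show ?thesis using B'\<sigma> by auto
  qed
  then have "(path_event i w' \<inter> {\<omega>\<in>space (P i). \<forall>t\<in>R. X t \<omega> \<ge> r})
           \<inter> {\<omega>\<in>space (P i). \<forall>k\<in>{1..n}. X (\<sigma> k) \<omega> \<in> B k}
      = path_event i w' \<inter> {\<omega>\<in>space (P i). \<forall>t\<in>{1..L}. X t \<omega> \<in> B' t}"
    by auto
  also have "measure (P i) \<dots> = (\<Prod>t\<in>{1..L}. F t)"
    using measure_path_box[OF w'(1), of B' i] B w'(2) by (simp add: F_def B'_def)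
  also have "\<dots> = (\<Prod>t\<in>R. F t) * (\<Prod>t\<in>\<sigma> ` {1..n}. F t)"
    using prod.subset_diff[OF \<sigma>(2)] by (simp add: R_def)
  also have "(\<Prod>t\<in>R. F t) = (\<Prod>t\<in>R. step_prob_ge (w'!(t-1)) (w'!t) r)"
    by (intro prod.cong) (auto simp: F_def B'_def R_def step_prob_ge_def)
  also have "(\<Prod>t\<in>\<sigma> ` {1..n}. F t) = (\<Prod>k\<in>{1..n}. p (w!(k-1)) (w!k) * measure (K (w!(k-1)) (w!k)) (B k))"
    using \<sigma>(1) steps B'\<sigma> by (simp add: prod.reindex F_def)
  also have "\<dots> = measure (P j) (path_event j w \<inter> {\<omega>\<in>space (P j). \<forall>k\<in>{1..n}. X k \<omega> \<in> B k})"
    using measure_path_box[OF w(1), of B j] B w(2) by simp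
  finally show ?thesis .
qed

lemma measure_path_sum_gt_embed:
  fixes \<sigma> :: "nat \<Rightarrow> nat" and n L :: nat
  defines "R \<equiv> {1..L} - \<sigma> ` {1..n}"
  assumes w: "length w = Suc n" "w!0 = j" and w': "length w' = Suc L" "w'!0 = i"
    and \<sigma>: "inj_on \<sigma> {1..n}" "\<sigma> ` {1..n} \<subseteq> {1..L}"
    and steps: "\<And>k. k \<in> {1..n} \<Longrightarrow> w'!(\<sigma> k - 1) = w!(k-1) \<and> w'!(\<sigma> k) = w!k"
  shows "(\<Prod>t\<in>R. step_prob_ge (w'!(t-1)) (w'!t) r) * measure (P j) (path_sum_gt j w y)
    \<le> measure (P i) (path_sum_gt i w' (y + real (L - n) * r))"
proof -
  define D where "D = path_event i w' \<inter> {\<omega>\<in>space (P i). \<forall>t\<in>R. X t \<omega> \<ge> r}"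
  have [measurable]: "D \<in> sets (P i)" unfolding D_def by measurable
  have "measure (P i) (D \<inter> {\<omega>\<in>space (P i). (\<Sum>k\<in>{1..n}. X (\<sigma> k) \<omega>) > y})
      = (\<Prod>t\<in>R. step_prob_ge (w'!(t-1)) (w'!t) r)
        * measure (P j) (path_event j w \<inter> {\<omega>\<in>space (P j). (\<Sum>k\<in>{1..n}. X k \<omega>) > y})"
    by (rule measure_sum_gt_eq_of_boxes[OF finite_measure_P finite_measure_P])
      (use measure_path_box_embed[OF w w' \<sigma> steps] in
        \<open>auto simp: D_def R_def prod_nonneg step_prob_ge_nonneg\<close>)
  then have "(\<Prod>t\<in>R. step_prob_ge (w'!(t-1)) (w'!t) r) * measure (P j) (path_sum_gt j w y)
      = measure (P i) (D \<inter> {\<omega>\<in>space (P i). (\<Sum>k\<in>{1..n}. X (\<sigma> k) \<omega>) > y})"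
    using w(1) by (simp add: path_sum_gt_def Ssum_def)
  also have "\<dots> \<le> measure (P i) (path_sum_gt i w' (y + real (L - n) * r))"
  proof (rule finite_measure.finite_measure_mono[OF finite_measure_P _ sets_path_sum_gt], safe)
    fix \<omega> assume \<omega>: "\<omega> \<in> D" "(\<Sum>k\<in>{1..n}. X (\<sigma> k) \<omega>) > y"
    have "card R = L - n"
      using \<sigma> by (simp add: R_def card_Diff_subset card_image)
    then have "real (L - n) * r \<le> (\<Sum>t\<in>R. X t \<omega>)"
      using \<omega>(1) sum_bounded_below[of R r "\<lambda>t. X t \<omega>"] by (auto simp: D_def)
    moreover have "Ssum X L \<omega> = (\<Sum>t\<in>R. X t \<omega>) + (\<Sum>k\<in>{1..n}. X (\<sigma> k) \<omega>)"
      using sum.subset_diff[OF \<sigma>(2), of "\<lambda>t. X t \<omega>"] sum.reindex[OF \<sigma>(1), of "\<lambda>t. X t \<omega>"]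
      by (simp add: Ssum_def R_def)
    ultimately show "\<omega> \<in> path_sum_gt i w' (y + real (L - n) * r)"
      using \<omega> w'(1) by (auto simp: path_sum_gt_def D_def)
  qed
  finally show ?thesis .
qed

lemma measure_path_sum_gt_le_rotate_to:
  assumes "excursion j w" "i \<in> set w" "i \<noteq> j"
  shows "measure (P j) (path_sum_gt j w y) \<le> measure (P i) (path_sum_gt i (rotate_to i w) y)"
proof -
  obtain n where w: "length w = Suc n" "1 \<le> n" "w!0 = j" "w!n = j"
    using assms(1) by (rule excursionE)
  define a where "a = first_visit i w"
  note a = first_visit_excursion[OF assms, folded a_def] first_visit_correct[OF assms(2), folded a_def]
  note rot = nth_rotate_to[OF w(1) a_def[symmetric]]
  define \<sigma> where "\<sigma> k = (if k \<le> a then k + (n - a) else k - a)" for k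
  have \<sigma>: "inj_on \<sigma> {1..n}" "\<sigma> ` {1..n} \<subseteq> {1..n}"
    using a w(1) by (auto simp: \<sigma>_def inj_on_def split: if_splits)
  then have R: "{1..n} - \<sigma> ` {1..n} = {}" by (simp add: endo_inj_surj)
  have steps: "rotate_to i w ! (\<sigma> k - 1) = w!(k-1) \<and> rotate_to i w ! (\<sigma> k) = w!k"
    if k: "k \<in> {1..n}" for k
  proof
    show "rotate_to i w ! (\<sigma> k) = w!k" using k a w(1) rot[of "\<sigma> k"] by (auto simp: \<sigma>_def)
    show "rotate_to i w ! (\<sigma> k - 1) = w!(k-1)"
    proof (cases "k = 1")
      case True
      then show ?thesis using a w rot[of "n - a"] by (simp add: \<sigma>_def)
    next
      case False
      then show ?thesis using k a w(1) rot[of "\<sigma> k - 1"] by (auto simp: \<sigma>_def)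
    qed
  qed
  have "length (rotate_to i w) = Suc n" "rotate_to i w ! 0 = i"
    using length_rotate_to[OF assms(2)] rot[of 0] a w(1) by auto
  from measure_path_sum_gt_embed[OF w(1,3) this \<sigma> steps, where y=y and r=0, unfolded R]
  show ?thesis by simp
qed

lemma exists_positive_path:
  assumes "irreducible_chain P M" "s \<noteq> t"
  shows "\<exists>(n::nat) f. 1 \<le> n \<and> f 0 = s \<and> f n = t \<and> (\<forall>k\<in>{1..n}. p (f (k-1)) (f k) > 0)"
proof -
  obtain n where pos: "measure (P s) {\<omega> \<in> space (P s). M n \<omega> = t} > 0"
    using assms(1) unfolding irreducible_chain_def by blast
  define W where "W = {w :: 's list. length w = Suc n \<and> w!n = t}"
  have "{\<omega> \<in> space (P s). M n \<omega> = t} = (\<Union>w\<in>W. path_event s w)"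
  proof (intro set_eqI iffI)
    fix \<omega> assume "\<omega> \<in> {\<omega> \<in> space (P s). M n \<omega> = t}"
    then have "map (\<lambda>k. M k \<omega>) [0..<Suc n] \<in> W" "\<omega> \<in> path_event s (map (\<lambda>k. M k \<omega>) [0..<Suc n])"
      by (auto simp: W_def path_event_def simp del: upt_Suc)
    then show "\<omega> \<in> (\<Union>w\<in>W. path_event s w)" by blast
  qed (auto simp: W_def path_event_def)
  moreover have "\<exists>w\<in>W. measure (P s) (path_event s w) \<noteq> 0"
  proof (rule ccontr)
    assume "\<not> ?thesis"
    then have "(\<Union>w\<in>W. path_event s w) \<in> null_sets (P s)"
      by (intro null_sets_UN') (auto simp: null_sets_def emeasure_P intro: countableI_type)
    then show False using pos calculation by (simp add: null_sets_def emeasure_P)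
  qed
  ultimately obtain w where w: "w \<in> W" "measure (P s) (path_event s w) \<noteq> 0" by blast
  have len: "length w = Suc n" using w(1) by (simp add: W_def)
  note meas = measure_path_event[OF len, of s]
  then have "w!0 = s" using w(2) by (auto split: if_splits)
  with meas have "measure (P s) (path_event s w) = (\<Prod>k\<in>{1..n}. p (w!(k-1)) (w!k))" by simp
  then have prod: "(\<Prod>k\<in>{1..n}. p (w!(k-1)) (w!k)) > 0"
    using w(2) measure_nonneg[of "P s" "path_event s w"] by linarith
  have "1 \<le> n" using w(1) \<open>w!0 = s\<close> assms(2) by (cases n) (auto simp: W_def)
  have "\<forall>k\<in>{1..n}. p (w!(k-1)) (w!k) > 0"
    using prod_pos_imp_factor_pos[OF _ _ prod] transition_nonneg by auto
  with w(1) \<open>w!0 = s\<close> \<open>1 \<le> n\<close>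
  have "1 \<le> n \<and> w!0 = s \<and> w!n = t \<and> (\<forall>k\<in>{1..n}. p (w!(k-1)) (w!k) > 0)"
    by (simp add: W_def)
  then show ?thesis by blast
qed

text \<open>A shortest such path reaches \<open>t\<close> only at its end.\<close>

lemma exists_positive_first_passage:
  assumes "irreducible_chain P M" "s \<noteq> t"
  shows "\<exists>(n::nat) f. 1 \<le> n \<and> f 0 = s \<and> f n = t \<and> (\<forall>k\<in>{1..n}. p (f (k-1)) (f k) > 0)
    \<and> (\<forall>k<n. f k \<noteq> t)"
proof -
  define Q where
    "Q (n::nat) \<longleftrightarrow> (\<exists>f. 1 \<le> n \<and> f 0 = s \<and> f n = t \<and> (\<forall>k\<in>{1..n}. p (f (k-1)) (f k) > 0))" for n
  obtain n where "Q n" using exists_positive_path[OF assms] by (auto simp: Q_def)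
  define m where "m = (LEAST n. Q n)"
  obtain f where f: "1 \<le> m" "f 0 = s" "f m = t" "\<forall>k\<in>{1..m}. p (f (k-1)) (f k) > 0"
    using LeastI[of Q n, OF \<open>Q n\<close>] by (auto simp: Q_def m_def)
  have "f k \<noteq> t" if "k < m" for k
  proof
    assume "f k = t"
    moreover have "k \<noteq> 0" using \<open>f k = t\<close> f(2) assms(2) by (cases k) auto
    ultimately have "Q k" using f that unfolding Q_def by (intro exI[of _ f]) auto
    with not_less_Least[of k Q] that show False by (simp add: m_def)
  qed
  with f show ?thesis by blast
qed

end

section \<open>Bridging excursions that avoid \<open>i\<close>\<close>

lemma excursion_nth_mod:
  assumes "excursion j w" "length w = Suc n" "1 \<le> s"
  shows "w ! ((s - 1) mod n + 1) = w ! (s mod n)"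
proof -
  obtain n' where w: "length w = Suc n'" "1 \<le> n'" "w!0 = j" "w!n' = j"
    using assms(1) by (rule excursionE)
  with assms(2) have "n' = n" by simp
  with minus_one_mod_plus_one[OF assms(3) w(2)] w(3,4) show ?thesis by (auto split: if_splits)
qed

locale mrw_bridge = mrw P p K M X
  for P :: "'s::countable \<Rightarrow> 'a measure" and p K M X +
  fixes i j :: 's and a b :: nat and u v :: "nat \<Rightarrow> 's"
  assumes i_neq_j: "i \<noteq> j"
    and u_path: "1 \<le> a" "u 0 = i" "u a = j" "\<And>k. k < a \<Longrightarrow> u k \<noteq> j"
    and u_pos: "\<And>k. k \<in> {1..a} \<Longrightarrow> p (u (k-1)) (u k) > 0"
    and v_path: "1 \<le> b" "v 0 = j" "v b = i" "\<And>k. k < b \<Longrightarrow> v k \<noteq> i"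
    and v_pos: "\<And>k. k \<in> {1..b} \<Longrightarrow> p (v (k-1)) (v k) > 0"
begin

text \<open>The path \<open>u\<close> from \<open>i\<close> to \<open>j\<close>, then \<open>N\<close> rounds of the excursion \<open>w\<close> from \<open>j\<close> (each without
  its initial \<open>j\<close>), then the path \<open>v\<close> from \<open>j\<close> back to \<open>i\<close>.\<close>

definition bridge :: "nat \<Rightarrow> 's list \<Rightarrow> 's list" where
  "bridge N w = (let n = length w - 1 in
     map (\<lambda>t. if t \<le> a then u t else if t \<le> a + N*n then w!((t-a-1) mod n + 1) else v (t-a-N*n))
       [0..<Suc (a+N*n+b)])"

lemma length_bridge: "length w = Suc n \<Longrightarrow> length (bridge N w) = Suc (a+N*n+b)"
  by (simp add: bridge_def)

lemma nth_bridge: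
  "length w = Suc n \<Longrightarrow> t \<le> a+N*n+b \<Longrightarrow>
    bridge N w ! t = (if t \<le> a then u t else if t \<le> a + N*n then w!((t-a-1) mod n + 1) else v (t-a-N*n))"
  by (simp del: upt_Suc add: bridge_def nth_map_upt less_Suc_eq_le)

lemma bridge_step_u:
  "length w = Suc n \<Longrightarrow> k \<in> {1..a} \<Longrightarrow> bridge N w ! (k-1) = u (k-1) \<and> bridge N w ! k = u k"
  using nth_bridge[of w n "k-1" N] nth_bridge[of w n k N] by auto

lemma bridge_step_w:
  assumes "excursion j w" "length w = Suc n" "s \<in> {1..N*n}"
  shows "bridge N w ! (a+s-1) = w ! ((s-1) mod n) \<and> bridge N w ! (a+s) = w ! ((s-1) mod n + 1)"
proof
  have "w!0 = j" using assms(1) by (simp add: excursion_def)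
  show "bridge N w ! (a+s) = w ! ((s-1) mod n + 1)" using assms(2,3) by (simp add: nth_bridge)
  show "bridge N w ! (a+s-1) = w ! ((s-1) mod n)"
  proof (cases "s = 1")
    case True
    then show ?thesis using assms(2) u_path(3) \<open>w!0 = j\<close> by (simp add: nth_bridge)
  next
    case False
    then have "bridge N w ! (a+s-1) = w ! ((s-1-1) mod n + 1)"
      using assms(2,3) nth_bridge[OF assms(2), of "a+s-1" N] by auto
    then show ?thesis using excursion_nth_mod[OF assms(1,2), of "s-1"] False assms(3) by auto
  qed
qed

lemma bridge_step_v:
  assumes "excursion j w" "length w = Suc n" "k \<in> {1..b}"
  shows "bridge N w ! (a+N*n+k-1) = v (k-1) \<and> bridge N w ! (a+N*n+k) = v k"
proof
  obtain n' where w: "length w = Suc n'" "1 \<le> n'" "w!0 = j" "w!n' = j"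
    using assms(1) by (rule excursionE)
  with assms(2) have "n' = n" by simp
  show "bridge N w ! (a+N*n+k) = v k" using assms(2,3) by (simp add: nth_bridge)
  show "bridge N w ! (a+N*n+k-1) = v (k-1)"
  proof (cases "k = 1")
    case True
    have "bridge N w ! (a+N*n) = j"
    proof (cases N)
      case (Suc N')
      then have "bridge N w ! (a+N*n) = w ! ((N*n - 1) mod n + 1)"
        using assms(2) w(2) \<open>n' = n\<close> nth_bridge[OF assms(2), of "a+N*n" N] by auto
      also have "\<dots> = j"
        using excursion_nth_mod[OF assms(1,2), of "N*n"] w \<open>n' = n\<close> Suc by simp
      finally show ?thesis .
    qed (use assms(2) u_path(3) in \<open>simp add: nth_bridge\<close>)
    then show ?thesis using True v_path(2) by simp
  next
    case False
    then show ?thesis using assms(2,3) nth_bridge[OF assms(2), of "a+N*n+k-1" N] by auto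
  qed
qed

lemma ups_path_bridge:
  assumes "excursion j w" "i \<notin> set w"
  shows "ups_path i j (bridge N w)"
proof -
  obtain n where w: "length w = Suc n" "1 \<le> n" "w!0 = j" "w!n = j"
    using assms(1) by (rule excursionE)
  have "bridge N w ! k \<noteq> i" if "a < k" "k < a+N*n+b" for k
  proof (cases "k \<le> a + N*n")
    case True
    have "(k-a-1) mod n + 1 < length w" using w(1,2) by simp
    then show ?thesis using True that w(1) assms(2) by (auto simp: nth_bridge dest: nth_mem)
  next
    case False
    then show ?thesis using that w(1) v_path(4)[of "k-a-N*n"] by (simp add: nth_bridge)
  qed
  then show ?thesis
    unfolding ups_path_def using w(1) u_path v_path(1,3)
    by (intro exI[of _ a] exI[of _ "a+N*n+b"]) (auto simp: length_bridge nth_bridge)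
qed

lemma inj_on_bridge: "inj_on (bridge 1) {w. excursion j w}"
proof (rule inj_onI)
  fix w1 w2 assume "w1 \<in> {w. excursion j w}" "w2 \<in> {w. excursion j w}"
    and eq: "bridge 1 w1 = bridge 1 w2"
  then obtain n1 n2 where w1: "length w1 = Suc n1" "w1!0 = j" and w2: "length w2 = Suc n2" "w2!0 = j"
    by (auto elim!: excursionE)
  have n: "n1 = n2" using eq length_bridge[OF w1(1), of 1] length_bridge[OF w2(1), of 1] by simp
  show "w1 = w2"
  proof (rule nth_equalityI)
    show "length w1 = length w2" using w1 w2 n by simp
    fix t assume t: "t < length w1"
    show "w1 ! t = w2 ! t"
    proof (cases "t = 0")
      case False
      then have "bridge 1 w1 ! (a+t) = w1 ! t" "bridge 1 w2 ! (a+t) = w2 ! t"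
        using nth_bridge[OF w1(1), of "a+t" 1] nth_bridge[OF w2(1), of "a+t" 1] t w1(1) n by auto
      then show ?thesis using eq by simp
    qed (use w1 w2 in simp)
  qed
qed

end

context mrw
begin

lemma exists_mrw_bridge:
  assumes "irreducible_chain P M" "i \<noteq> j"
  shows "\<exists>a b u v. mrw_bridge P p K M X i j a b u v"
proof -
  obtain a :: nat and u :: "nat \<Rightarrow> 's"
    where u: "1 \<le> a" "u 0 = i" "u a = j" "\<forall>k\<in>{1..a}. p (u (k-1)) (u k) > 0" "\<forall>k<a. u k \<noteq> j"
    using exists_positive_first_passage[OF assms] by blast
  obtain b :: nat and v :: "nat \<Rightarrow> 's"
    where v: "1 \<le> b" "v 0 = j" "v b = i" "\<forall>k\<in>{1..b}. p (v (k-1)) (v k) > 0" "\<forall>k<b. v k \<noteq> i"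
    using exists_positive_first_passage[OF assms(1) assms(2)[symmetric]] by blast
  have "mrw_bridge P p K M X i j a b u v"
    by unfold_locales (use assms(2) u v in auto)
  then show ?thesis by blast
qed

end

context mrw_bridge
begin

definition bridge_weight :: "real \<Rightarrow> real" where
  "bridge_weight r =
     (\<Prod>k\<in>{1..a}. step_prob_ge (u (k-1)) (u k) r) * (\<Prod>k\<in>{1..b}. step_prob_ge (v (k-1)) (v k) r)"

lemma exists_bridge_threshold:
  "\<exists>r\<le>0. (\<forall>k\<in>{1..a}. step_prob_ge (u (k-1)) (u k) r > 0)
    \<and> (\<forall>k\<in>{1..b}. step_prob_ge (v (k-1)) (v k) r > 0)"
proof -
  define F where "F = (\<lambda>k. (u (k-1), u k)) ` {1..a} \<union> (\<lambda>k. (v (k-1), v k)) ` {1..b}"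
  have "finite F" "\<And>s t. (s, t) \<in> F \<Longrightarrow> p s t > 0"
    using u_pos v_pos by (auto simp: F_def)
  from exists_step_threshold[OF this] show ?thesis unfolding F_def by fast
qed

lemma measure_path_sum_gt_le_bridge:
  assumes "excursion j w"
  shows "bridge_weight r * measure (P j) (path_sum_gt j w y)
    \<le> measure (P i) (path_sum_gt i (bridge 1 w) (y + real (a+b) * r))"
proof -
  obtain n where w: "length w = Suc n" "1 \<le> n" "w!0 = j" "w!n = j"
    using assms by (rule excursionE)
  define L where "L = a + n + b"
  define f where "f t = step_prob_ge (bridge 1 w ! (t-1)) (bridge 1 w ! t) r" for t
  have \<sigma>: "inj_on ((+) a) {1..n}" "(+) a ` {1..n} \<subseteq> {1..L}" by (auto simp: L_def)
  have steps: "bridge 1 w ! (a + k - 1) = w!(k-1) \<and> bridge 1 w ! (a + k) = w!k" if "k \<in> {1..n}" for k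
    using bridge_step_w[OF assms w(1), of k 1] that by auto
  have "{1..L} - (+) a ` {1..n} = {1..a} \<union> {a+n+1..a+n+b}"
    by (auto simp: L_def image_iff)
  then have "(\<Prod>t\<in>{1..L} - (+) a ` {1..n}. f t) = (\<Prod>t\<in>{1..a}. f t) * (\<Prod>k\<in>{1..b}. f (a+n+k))"
    using prod.shift_bounds_cl_nat_ivl[of f 1 "a+n" b] by (simp add: prod.union_disjoint add.commute)
  also have "\<dots> = bridge_weight r"
    unfolding bridge_weight_def f_def
    using bridge_step_u[OF w(1), where N=1] bridge_step_v[OF assms w(1), where N=1]
    by (intro arg_cong2[where f="(*)"] prod.cong) auto
  finally have "(\<Prod>t\<in>{1..L} - (+) a ` {1..n}. f t) = bridge_weight r" .
  moreover have "length (bridge 1 w) = Suc L" "bridge 1 w ! 0 = i"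
    using length_bridge[OF w(1)] nth_bridge[OF w(1), of 0] u_path(2) by (simp_all add: L_def)
  ultimately show ?thesis
    using measure_path_sum_gt_embed[OF w(1,3) _ _ \<sigma> steps, where r=r and y=y] by (simp add: f_def L_def)
qed

definition bridge_bounds :: "nat \<Rightarrow> nat \<Rightarrow> real \<Rightarrow> (nat \<Rightarrow> real) \<Rightarrow> nat \<Rightarrow> real set" where
  "bridge_bounds N n r q t = (if t \<le> a \<or> a + N*n < t then {r..} else {q ((t-a-1) mod n + 1)..})"

lemma sets_bridge_bounds: "bridge_bounds N n r q t \<in> sets borel"
  by (simp add: bridge_bounds_def)

lemma bridge_bounds_step_pos:
  assumes w: "excursion j w" "length w = Suc n" and t: "t \<in> {1..a+N*n+b}"
    and r: "\<forall>k\<in>{1..a}. step_prob_ge (u (k-1)) (u k) r > 0" "\<forall>k\<in>{1..b}. step_prob_ge (v (k-1)) (v k) r > 0"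
    and q: "\<And>k. k \<in> {1..n} \<Longrightarrow> p (w!(k-1)) (w!k) * measure (K (w!(k-1)) (w!k)) {q k..} > 0"
  shows "p (bridge N w ! (t-1)) (bridge N w ! t)
      * measure (K (bridge N w ! (t-1)) (bridge N w ! t)) (bridge_bounds N n r q t) > 0"
proof -
  consider "t \<le> a" | "a < t" "t \<le> a + N*n" | "a + N*n < t" by linarith
  then show ?thesis
  proof cases
    case 1
    then show ?thesis
      using bridge_step_u[OF w(2), of t N] r(1) t by (simp add: bridge_bounds_def step_prob_ge_def)
  next
    case 2
    define s where "s = t - a"
    define k where "k = (s-1) mod n + 1"
    have s: "s \<in> {1..N*n}" "t = a + s" using 2 by (auto simp: s_def)
    then have "0 < n" by (cases n) auto
    then have "k \<in> {1..n}" "k - 1 = (s-1) mod n" by (auto simp: k_def Suc_le_eq)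
    then show ?thesis
      using bridge_step_w[OF w s(1)] q[of k] s 2 by (simp add: bridge_bounds_def k_def)
  next
    case 3
    define k where "k = t - a - N*n"
    have k: "k \<in> {1..b}" "t = a + N*n + k" using 3 t by (auto simp: k_def)
    then show ?thesis
      using bridge_step_v[OF w k(1), of N] r(2) 3 by (simp add: bridge_bounds_def step_prob_ge_def)
  qed
qed

lemma measure_bridge_bounds_pos:
  assumes w: "excursion j w" "length w = Suc n"
    and r: "\<forall>k\<in>{1..a}. step_prob_ge (u (k-1)) (u k) r > 0" "\<forall>k\<in>{1..b}. step_prob_ge (v (k-1)) (v k) r > 0"
    and q: "\<And>k. k \<in> {1..n} \<Longrightarrow> p (w!(k-1)) (w!k) * measure (K (w!(k-1)) (w!k)) {q k..} > 0"
  shows "measure (P i) (path_event i (bridge N w)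
           \<inter> {\<omega>\<in>space (P i). \<forall>t\<in>{1..a+N*n+b}. X t \<omega> \<in> bridge_bounds N n r q t}) > 0"
proof -
  have "(\<Prod>t\<in>{1..a+N*n+b}. p (bridge N w ! (t-1)) (bridge N w ! t)
      * measure (K (bridge N w ! (t-1)) (bridge N w ! t)) (bridge_bounds N n r q t)) > 0"
    using bridge_bounds_step_pos[OF w _ r q] by (intro prod_pos) auto
  moreover have "bridge N w ! 0 = i" using nth_bridge[OF w(2), of 0] u_path(2) by simp
  ultimately show ?thesis
    using measure_path_box[OF length_bridge[OF w(2), of N], where B="bridge_bounds N n r q" and i=i]
    by (simp add: sets_bridge_bounds)
qed

lemma Ssum_bridge_bounds_ge:
  assumes "\<forall>t\<in>{1..a+N*n+b}. X t \<omega> \<in> bridge_bounds N n r q t"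
  shows "Ssum X (a+N*n+b) \<omega> \<ge> real (a+b) * r + real N * (\<Sum>k\<in>{1..n}. q k)"
proof -
  have "r \<le> X t \<omega>" if "t \<in> {1..a} \<or> t \<in> {a+N*n+1..a+N*n+b}" for t
    using bspec[OF assms, of t] that by (auto simp: bridge_bounds_def)
  then have "real a * r \<le> (\<Sum>t\<in>{1..a}. X t \<omega>)" "real b * r \<le> (\<Sum>k\<in>{1..b}. X (a+N*n+k) \<omega>)"
    using sum_bounded_below[of "{1..a}" r "\<lambda>t. X t \<omega>"]
      sum_bounded_below[of "{1..b}" r "\<lambda>k. X (a+N*n+k) \<omega>"]
    by auto
  moreover have "real N * (\<Sum>k\<in>{1..n}. q k) \<le> (\<Sum>s\<in>{1..N*n}. X (a+s) \<omega>)"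
  proof -
    have "(\<Sum>s\<in>{1..N*n}. q ((s-1) mod n + 1)) \<le> (\<Sum>s\<in>{1..N*n}. X (a+s) \<omega>)"
    proof (rule sum_mono)
      fix s assume "s \<in> {1..N*n}"
      then show "q ((s-1) mod n + 1) \<le> X (a+s) \<omega>"
        using bspec[OF assms, of "a+s"] by (auto simp: bridge_bounds_def)
    qed
    then show ?thesis using sum_periodic[where q=q and N=N and n=n] by simp
  qed
  ultimately show ?thesis
    unfolding Ssum_def sum_atLeastAtMost_split3 by (simp add: algebra_simps)
qed

lemma ups_tail_pos_of_avoiding_excursion:
  assumes w: "excursion j w" "i \<notin> set w" and pos: "measure (P j) (path_sum_gt j w 0) > 0"
  shows "measure (P i) (S_at_gt (P i) X (ups_time M i j) 0) > 0"
proof -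
  obtain n where n: "length w = Suc n" "w!0 = j"
    using w(1) by (auto elim: excursionE)
  have "measure (P j) (path_event j w \<inter> {\<omega>\<in>space (P j). (\<Sum>k\<in>{1..n}. X k \<omega>) > 0}) > 0"
    using pos n(1) by (simp add: path_sum_gt_def Ssum_def)
  from measure_sum_pos_imp_thresholds[where g=X, OF finite_measure_P sets_path_event X_measurable this]
  obtain q where q: "(\<Sum>k\<in>{1..n}. q k) > 0"
    and "measure (P j) (path_event j w \<inter> {\<omega>\<in>space (P j). \<forall>k\<in>{1..n}. X k \<omega> \<ge> q k}) > 0"
    by blast
  then have prod_pos: "(\<Prod>k\<in>{1..n}. p (w!(k-1)) (w!k) * measure (K (w!(k-1)) (w!k)) {q k..}) > 0"
    using measure_path_box[OF n(1), where B="\<lambda>k. {q k..}" and i=j] n(2) by simp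
  have q_steps: "p (w!(k-1)) (w!k) * measure (K (w!(k-1)) (w!k)) {q k..} > 0" if "k \<in> {1..n}" for k
    using prod_pos_imp_factor_pos[OF _ _ prod_pos that] transition_nonneg measure_nonneg by simp
  obtain r where "r \<le> 0" and r: "\<forall>k\<in>{1..a}. step_prob_ge (u (k-1)) (u k) r > 0"
    "\<forall>k\<in>{1..b}. step_prob_ge (v (k-1)) (v k) r > 0"
    using exists_bridge_threshold by blast
  text \<open>Enough rounds of \<open>w\<close> make up for the (possibly negative) increments along \<open>u\<close> and \<open>v\<close>.\<close>
  obtain N :: nat where N: "- (real (a+b) * r) < real N * (\<Sum>k\<in>{1..n}. q k)"
    using ex_less_of_nat_mult[OF q] by blast
  let ?E = "path_event i (bridge N w)
    \<inter> {\<omega>\<in>space (P i). \<forall>t\<in>{1..a+N*n+b}. X t \<omega> \<in> bridge_bounds N n r q t}"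
  have "?E \<subseteq> path_sum_gt i (bridge N w) 0"
  proof
    fix \<omega> assume \<omega>: "\<omega> \<in> ?E"
    then have "Ssum X (a+N*n+b) \<omega> \<ge> real (a+b) * r + real N * (\<Sum>k\<in>{1..n}. q k)"
      by (intro Ssum_bridge_bounds_ge) blast
    then show "\<omega> \<in> path_sum_gt i (bridge N w) 0"
      using \<omega> N length_bridge[OF n(1), of N] by (auto simp: path_sum_gt_def)
  qed
  also have "\<dots> \<subseteq> S_at_gt (P i) X (ups_time M i j) 0"
    using ups_path_bridge[OF w] by (auto simp: S_at_gt_ups_time_eq)
  finally have "measure (P i) ?E \<le> measure (P i) (S_at_gt (P i) X (ups_time M i j) 0)"
    by (rule finite_measure.finite_measure_mono[OF finite_measure_P _ sets_S_at_gt_ups_time])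
  with measure_bridge_bounds_pos[OF w(1) n(1) r q_steps, of N] show ?thesis by linarith
qed

lemma nn_integral_avoiding_le_ups_tail:
  assumes "bridge_weight r > 0"
  shows "(\<integral>\<^sup>+w. emeasure (P j) (path_sum_gt j w y) \<partial>count_space {w. excursion j w \<and> i \<notin> set w})
    \<le> ennreal (1 / bridge_weight r)
      * emeasure (P i) (S_at_gt (P i) X (ups_time M i j) (y + real (a+b) * r))"
proof -
  let ?W = "{w. excursion j w \<and> i \<notin> set w}" and ?c = "bridge_weight r" and ?z = "y + real (a+b) * r"
  have "(\<integral>\<^sup>+w. emeasure (P j) (path_sum_gt j w y) \<partial>count_space ?W)
      \<le> (\<integral>\<^sup>+w. ennreal (1 / ?c) * emeasure (P i) (path_sum_gt i (bridge 1 w) ?z) \<partial>count_space ?W)"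
  proof (rule nn_integral_mono)
    fix w assume "w \<in> space (count_space ?W)"
    then have "measure (P j) (path_sum_gt j w y)
        \<le> (1 / ?c) * measure (P i) (path_sum_gt i (bridge 1 w) ?z)"
      using measure_path_sum_gt_le_bridge[of w r y] assms by (simp add: field_simps)
    then show "emeasure (P j) (path_sum_gt j w y)
        \<le> ennreal (1 / ?c) * emeasure (P i) (path_sum_gt i (bridge 1 w) ?z)"
      using assms by (simp add: emeasure_P ennreal_mult[symmetric])
  qed
  also have "\<dots> = ennreal (1 / ?c)
      * (\<integral>\<^sup>+w. emeasure (P i) (path_sum_gt i (bridge 1 w) ?z) \<partial>count_space ?W)"
    by (rule nn_integral_cmult) simp
  also have "\<dots> \<le> ennreal (1 / ?c) * emeasure (P i) (S_at_gt (P i) X (ups_time M i j) ?z)"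
    using inj_on_subset[OF inj_on_bridge, of ?W] ups_path_bridge
    by (intro mult_left_mono nn_integral_le_ups_tail) auto
  finally show ?thesis .
qed

lemma nn_integral_visiting_le_ups_tail:
  "(\<integral>\<^sup>+w. emeasure (P j) (path_sum_gt j w y) \<partial>count_space {w. excursion j w \<and> i \<in> set w})
    \<le> emeasure (P i) (S_at_gt (P i) X (ups_time M i j) y)"
proof -
  let ?W = "{w. excursion j w \<and> i \<in> set w}"
  have "(\<integral>\<^sup>+w. emeasure (P j) (path_sum_gt j w y) \<partial>count_space ?W)
      \<le> (\<integral>\<^sup>+w. emeasure (P i) (path_sum_gt i (rotate_to i w) y) \<partial>count_space ?W)"
    using measure_path_sum_gt_le_rotate_to i_neq_j
    by (intro nn_integral_mono) (auto simp: emeasure_P)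
  also have "\<dots> \<le> emeasure (P i) (S_at_gt (P i) X (ups_time M i j) y)"
    using inj_on_rotate_to[OF i_neq_j] ups_path_rotate_to i_neq_j
    by (intro nn_integral_le_ups_tail) auto
  finally show ?thesis .
qed

lemma hit_tail_le_ups_tail:
  assumes "r \<le> 0" "bridge_weight r > 0"
  shows "measure (P j) (S_at_gt (P j) X (hit_time M j) y)
    \<le> (1 / bridge_weight r + 1)
      * measure (P i) (S_at_gt (P i) X (ups_time M i j) (y + real (a+b) * r))"
proof -
  let ?c = "bridge_weight r" and ?z = "y + real (a+b) * r"
  let ?ups = "\<lambda>y. emeasure (P i) (S_at_gt (P i) X (ups_time M i j) y)"
  have split: "{w. excursion j w} = {w. excursion j w \<and> i \<notin> set w} \<union> {w. excursion j w \<and> i \<in> set w}"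
    "{w. excursion j w \<and> i \<notin> set w} \<inter> {w. excursion j w \<and> i \<in> set w} = {}"
    by auto
  have "emeasure (P j) (S_at_gt (P j) X (hit_time M j) y)
      = (\<integral>\<^sup>+w. emeasure (P j) (path_sum_gt j w y) \<partial>count_space {w. excursion j w \<and> i \<notin> set w})
      + (\<integral>\<^sup>+w. emeasure (P j) (path_sum_gt j w y) \<partial>count_space {w. excursion j w \<and> i \<in> set w})"
    unfolding emeasure_hit_tail split(1) nn_integral_count_space_Un[OF split(2)] ..
  also have "\<dots> \<le> ennreal (1 / ?c) * ?ups ?z + ?ups ?z"
  proof (intro add_mono nn_integral_avoiding_le_ups_tail assms(2))
    have "?z \<le> y" using assms(1) by (simp add: mult_nonneg_nonpos)
    then have "?ups y \<le> ?ups ?z"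
      by (intro emeasure_mono[OF _ sets_S_at_gt_ups_time]) (auto simp: S_at_gt_def)
    with nn_integral_visiting_le_ups_tail
    show "(\<integral>\<^sup>+w. emeasure (P j) (path_sum_gt j w y) \<partial>count_space {w. excursion j w \<and> i \<in> set w})
        \<le> ?ups ?z"
      by (rule order_trans)
  qed
  also have "\<dots> = ennreal ((1 / ?c + 1) * measure (P i) (S_at_gt (P i) X (ups_time M i j) ?z))"
  proof -
    define d where "d = 1 / ?c"
    have "d \<ge> 0" using assms(2) by (simp add: d_def)
    then show ?thesis
      unfolding d_def[symmetric] by (simp add: emeasure_P distrib_right ennreal_plus ennreal_mult)
  qed
  finally show ?thesis
    using assms(2) by (simp add: emeasure_P ennreal_le_iff)
qed

lemma ups_tail_pos_of_hit_tail_pos: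
  assumes "measure (P j) (S_at_gt (P j) X (hit_time M j) 0) > 0"
  shows "measure (P i) (S_at_gt (P i) X (ups_time M i j) 0) > 0"
proof -
  have "\<exists>w. excursion j w \<and> measure (P j) (path_sum_gt j w 0) > 0"
  proof (rule ccontr)
    assume "\<not> ?thesis"
    then have "measure (P j) (path_sum_gt j w 0) = 0" if "excursion j w" for w
      using that measure_nonneg[of "P j" "path_sum_gt j w 0"] by (meson not_less order.antisym)
    then have "emeasure (P j) (path_sum_gt j w 0) = 0" if "excursion j w" for w
      using that by (simp add: emeasure_P)
    then have "emeasure (P j) (S_at_gt (P j) X (hit_time M j) 0) = 0"
      unfolding emeasure_hit_tail by (subst nn_integral_cong[where v="\<lambda>_. 0"]) auto
    with assms show False by (simp add: emeasure_P)
  qed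
  then obtain w where w: "excursion j w" "measure (P j) (path_sum_gt j w 0) > 0" by blast
  show ?thesis
  proof (cases "i \<in> set w")
    case True
    have "measure (P i) (path_sum_gt i (rotate_to i w) 0)
        \<le> measure (P i) (S_at_gt (P i) X (ups_time M i j) 0)"
      using ups_path_rotate_to[OF w(1) True i_neq_j]
      by (intro finite_measure.finite_measure_mono[OF finite_measure_P _ sets_S_at_gt_ups_time])
        (auto simp: S_at_gt_ups_time_eq)
    then show ?thesis
      using measure_path_sum_gt_le_rotate_to[OF w(1) True i_neq_j, of 0] w(2) by linarith
  next
    case False
    then show ?thesis by (rule ups_tail_pos_of_avoiding_excursion[OF w(1) _ w(2)])
  qed
qed

lemma exists_bridge_weight_pos: "\<exists>r\<le>0. bridge_weight r > 0"
proof -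
  obtain r where "r \<le> 0" and r: "\<forall>k\<in>{1..a}. step_prob_ge (u (k-1)) (u k) r > 0"
    "\<forall>k\<in>{1..b}. step_prob_ge (v (k-1)) (v k) r > 0"
    using exists_bridge_threshold by blast
  have "bridge_weight r > 0"
    unfolding bridge_weight_def using r by (intro mult_pos_pos prod_pos) auto
  with \<open>r \<le> 0\<close> show ?thesis by blast
qed

lemma hit_ups_tail_ratio_bounded:
  "\<exists>x\<ge>0. Limsup at_top (\<lambda>y::real.
     ereal (measure (P j) (S_at_gt (P j) X (hit_time M j) y))
     / ereal (measure (P i) (S_at_gt (P i) X (ups_time M i j) (y - x)))) < \<infinity>"
proof -
  obtain r where r: "r \<le> 0" "bridge_weight r > 0" using exists_bridge_weight_pos by blast
  define x where "x = - (real (a+b) * r)"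
  have "Limsup at_top (\<lambda>y::real.
     ereal (measure (P j) (S_at_gt (P j) X (hit_time M j) y))
     / ereal (measure (P i) (S_at_gt (P i) X (ups_time M i j) (y - x))))
    \<le> ereal (1 / bridge_weight r + 1)"
    by (intro Limsup_bounded always_eventually allI ereal_divide_le_of_le_mult)
      (use hit_tail_le_ups_tail[OF r] r(2) in \<open>simp_all add: x_def\<close>)
  moreover have "x \<ge> 0" using r(1) by (simp add: x_def mult_nonneg_nonpos)
  ultimately show ?thesis by (intro exI[of _ x]) (auto intro: le_less_trans)
qed

end

theorem lemma7p4:
  fixes P :: "'s::countable \<Rightarrow> 'a measure" and p :: "'s \<Rightarrow> 's \<Rightarrow> real"
    and K :: "'s \<Rightarrow> 's \<Rightarrow> real measure" and M :: "nat \<Rightarrow> 'a \<Rightarrow> 's"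
    and X :: "nat \<Rightarrow> 'a \<Rightarrow> real" and i j :: 's
  assumes "MRW P p K M X" and "irreducible_chain P M" and "positive_recurrent P M"
    and "i \<noteq> j"
  shows "(\<exists>x\<ge>0. Limsup at_top (\<lambda>y::real.
             ereal (measure (P j) (S_at_gt (P j) X (hit_time M j) y))
             / ereal (measure (P i) (S_at_gt (P i) X (ups_time M i j) (y - x)))) < \<infinity>)
      \<and> (measure (P j) (S_at_gt (P j) X (hit_time M j) 0) > 0
          \<longrightarrow> measure (P i) (S_at_gt (P i) X (ups_time M i j) 0) > 0)"
proof -
  interpret mrw P p K M X by unfold_locales (rule assms(1))
  obtain a b u v where "mrw_bridge P p K M X i j a b u v"
    using exists_mrw_bridge[OF assms(2,4)] by blast
  then interpret mrw_bridge P p K M X i j a b u v .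
  show ?thesis using hit_ups_tail_ratio_bounded ups_tail_pos_of_hit_tail_pos by blast
qed

end
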